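(* Let $\mathcal H$ be an infinite-dimensional complex Hilbert space. Define a partial operation $\overline\oplus$ on $\mathcal V_f(\mathcal H)$ by: for $t,s\in\mathcal V_f(\mathcal H)$, $t\,\overline\oplus\, s$ is defined if and only if $t\oplus s$ is defined and $(t+s)_r=t_r+s_r$, and then $t\,\overline\oplus\,s=t\oplus s$. Then $(\mathcal V_f(\mathcal H);\overline\oplus,o)$ is a generalized effect algebra.
   Context: Bilinear forms $t$ on $\mathcal H$ are sesquilinear maps $D(t)\times D(t)\to\mathbb C$ on a dense linear subspace $D(t)$ (linear in the first argument); $t$ is positive if $t(x,x)\ge0$ on $D(t)$, bounded if $\sup\{t(x,x)\mid x\in D(t),\|x\|=1\}<\infty$. The sum $t+s$ has domain $D(t)\cap D(s)$. $o$ is the zero form on $\mathcal H$. $\mathcal V_f(\mathcal H)$ is the set of positive bilinear forms with dense domain such that $D(t)=\mathcal H$ whenever $t$ is bounded; $t\oplus s$ is defined iff $t$ or $s$ is bounded or $D(t)=D(s)$, and then $t\oplus s=t+s$. A positive form is closed if $D(t)$ is a Hilbert space under $(x,y)_t=t(x,y)+(1+m_t)(x,y)$, $m_t=\inf\{t(x,x)\mid x\in D(t),\|x\|=1\}$; closable if it has a closed extension. For a positive form $t$, the regular part $t_r$ is the largest closable positive form with domain $D(t)$ satisfying $t_r(x,x)\le t(x,x)$ for all $x\in D(t)$. A generalized effect algebra is a structure $(E;\oplus,0)$ with a partial operation that is commutative and associative (when one side is defined), has $x\oplus0=x$, is cancellative, and satisfies $x\oplus y=0\Rightarrow x=y=0$.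 *)

theory Defs
  imports Complex_Main
begin

text \<open>A complex Hilbert space structure on a type 'a: complex scalar multiplication sc and
  inner product ip (linear in the first argument), complete w.r.t. the induced norm.\<close>

definition hnorm :: "('a \<Rightarrow> 'a \<Rightarrow> complex) \<Rightarrow> 'a \<Rightarrow> real" where
  "hnorm ip x = sqrt (Re (ip x x))"

definition complex_hilbert_space ::
  "(complex \<Rightarrow> 'a::ab_group_add \<Rightarrow> 'a) \<Rightarrow> ('a \<Rightarrow> 'a \<Rightarrow> complex) \<Rightarrow> bool" where
  "complex_hilbert_space sc ip \<longleftrightarrow>
     (\<forall>a x y. sc a (x + y) = sc a x + sc a y) \<and>
     (\<forall>a b x. sc (a + b) x = sc a x + sc b x) \<and>
     (\<forall>a b x. sc a (sc b x) = sc (a * b) x) \<and>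
     (\<forall>x. sc 1 x = x) \<and>
     (\<forall>x y z. ip (x + y) z = ip x z + ip y z) \<and>
     (\<forall>a x y. ip (sc a x) y = a * ip x y) \<and>
     (\<forall>x y. ip y x = cnj (ip x y)) \<and>
     (\<forall>x. Im (ip x x) = 0 \<and> 0 \<le> Re (ip x x)) \<and>
     (\<forall>x. ip x x = 0 \<longrightarrow> x = 0) \<and>
     (\<forall>X. (\<forall>e>0. \<exists>N. \<forall>m\<ge>N. \<forall>k\<ge>N. hnorm ip (X m - X k) < e)
          \<longrightarrow> (\<exists>L. (\<lambda>k. hnorm ip (X k - L)) \<longlonglongrightarrow> 0))"

definition cspan :: "(complex \<Rightarrow> 'a::ab_group_add \<Rightarrow> 'a) \<Rightarrow> 'a set \<Rightarrow> 'a set" where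
  "cspan sc S = {y. \<exists>c. y = (\<Sum>v\<in>S. sc (c v) v)}"

definition infinite_dimensional :: "(complex \<Rightarrow> 'a::ab_group_add \<Rightarrow> 'a) \<Rightarrow> bool" where
  "infinite_dimensional sc \<longleftrightarrow> (\<forall>S. finite S \<longrightarrow> cspan sc S \<noteq> UNIV)"

text \<open>A form is a pair (domain, values); by convention the value is 0 outside domain x domain,
  so that equality of forms is equality of pairs.\<close>
type_synonym 'a form = "'a set \<times> ('a \<Rightarrow> 'a \<Rightarrow> complex)"

definition fdom :: "'a form \<Rightarrow> 'a set" where "fdom t = fst t"
definition fval :: "'a form \<Rightarrow> 'a \<Rightarrow> 'a \<Rightarrow> complex" where "fval t = snd t"

definition lin_subspace :: "(complex \<Rightarrow> 'a::ab_group_add \<Rightarrow> 'a) \<Rightarrow> 'a set \<Rightarrow> bool" where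
  "lin_subspace sc D \<longleftrightarrow> 0 \<in> D \<and> (\<forall>x\<in>D. \<forall>y\<in>D. x + y \<in> D) \<and> (\<forall>a. \<forall>x\<in>D. sc a x \<in> D)"

definition dense_in :: "('a::ab_group_add \<Rightarrow> 'a \<Rightarrow> complex) \<Rightarrow> 'a set \<Rightarrow> bool" where
  "dense_in ip D \<longleftrightarrow> (\<forall>x. \<forall>e>0. \<exists>y\<in>D. hnorm ip (x - y) < e)"

definition is_form ::
  "(complex \<Rightarrow> 'a::ab_group_add \<Rightarrow> 'a) \<Rightarrow> ('a \<Rightarrow> 'a \<Rightarrow> complex) \<Rightarrow> 'a form \<Rightarrow> bool" where
  "is_form sc ip t \<longleftrightarrow>
     lin_subspace sc (fdom t) \<and> dense_in ip (fdom t) \<and>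
     (\<forall>x\<in>fdom t. \<forall>y\<in>fdom t. \<forall>z\<in>fdom t. fval t (x + y) z = fval t x z + fval t y z) \<and>
     (\<forall>x\<in>fdom t. \<forall>y\<in>fdom t. \<forall>z\<in>fdom t. fval t x (y + z) = fval t x y + fval t x z) \<and>
     (\<forall>a. \<forall>x\<in>fdom t. \<forall>y\<in>fdom t. fval t (sc a x) y = a * fval t x y) \<and>
     (\<forall>a. \<forall>x\<in>fdom t. \<forall>y\<in>fdom t. fval t x (sc a y) = cnj a * fval t x y) \<and>
     (\<forall>x y. \<not> (x \<in> fdom t \<and> y \<in> fdom t) \<longrightarrow> fval t x y = 0)"

definition positive_form :: "'a form \<Rightarrow> bool" where
  "positive_form t \<longleftrightarrow> (\<forall>x\<in>fdom t. Im (fval t x x) = 0 \<and> 0 \<le> Re (fval t x x))"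

definition bounded_form :: "('a \<Rightarrow> 'a \<Rightarrow> complex) \<Rightarrow> 'a form \<Rightarrow> bool" where
  "bounded_form ip t \<longleftrightarrow> bdd_above {Re (fval t x x) | x. x \<in> fdom t \<and> hnorm ip x = 1}"

definition form_add :: "'a form \<Rightarrow> 'a form \<Rightarrow> 'a form" where
  "form_add t s = (fdom t \<inter> fdom s,
     (\<lambda>x y. if x \<in> fdom t \<inter> fdom s \<and> y \<in> fdom t \<inter> fdom s
            then fval t x y + fval s x y else 0))"

definition zero_form :: "'a form" where
  "zero_form = (UNIV, (\<lambda>x y. 0))"

definition Vf ::
  "(complex \<Rightarrow> 'a::ab_group_add \<Rightarrow> 'a) \<Rightarrow> ('a \<Rightarrow> 'a \<Rightarrow> complex) \<Rightarrow> 'a form set" where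
  "Vf sc ip = {t. is_form sc ip t \<and> positive_form t \<and>
                  (bounded_form ip t \<longrightarrow> fdom t = UNIV)}"

definition oplus_defined :: "('a \<Rightarrow> 'a \<Rightarrow> complex) \<Rightarrow> 'a form \<Rightarrow> 'a form \<Rightarrow> bool" where
  "oplus_defined ip t s \<longleftrightarrow> bounded_form ip t \<or> bounded_form ip s \<or> fdom t = fdom s"

definition lower_bound :: "('a \<Rightarrow> 'a \<Rightarrow> complex) \<Rightarrow> 'a form \<Rightarrow> real" where
  "lower_bound ip t = Inf {Re (fval t x x) | x. x \<in> fdom t \<and> hnorm ip x = 1}"

text \<open>norm on D(t) induced by (x,y)_t = t(x,y) + (1+m_t)(x,y)\<close>
definition form_norm :: "('a \<Rightarrow> 'a \<Rightarrow> complex) \<Rightarrow> 'a form \<Rightarrow> 'a \<Rightarrow> real" where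
  "form_norm ip t x = sqrt (Re (fval t x x) + (1 + lower_bound ip t) * (hnorm ip x)^2)"

definition closed_form ::
  "(complex \<Rightarrow> 'a::ab_group_add \<Rightarrow> 'a) \<Rightarrow> ('a \<Rightarrow> 'a \<Rightarrow> complex) \<Rightarrow> 'a form \<Rightarrow> bool" where
  "closed_form sc ip t \<longleftrightarrow> is_form sc ip t \<and> positive_form t \<and>
     (\<forall>X. (\<forall>k. X k \<in> fdom t) \<and>
          (\<forall>e>0. \<exists>N. \<forall>m\<ge>N. \<forall>k\<ge>N. form_norm ip t (X m - X k) < e)
          \<longrightarrow> (\<exists>L\<in>fdom t. (\<lambda>k. form_norm ip t (X k - L)) \<longlonglongrightarrow> 0))"

definition closable_form ::
  "(complex \<Rightarrow> 'a::ab_group_add \<Rightarrow> 'a) \<Rightarrow> ('a \<Rightarrow> 'a \<Rightarrow> complex) \<Rightarrow> 'a form \<Rightarrow> bool" where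
  "closable_form sc ip t \<longleftrightarrow>
     (\<exists>s. closed_form sc ip s \<and> fdom t \<subseteq> fdom s \<and>
          (\<forall>x\<in>fdom t. \<forall>y\<in>fdom t. fval s x y = fval t x y))"

definition reg_candidate ::
  "(complex \<Rightarrow> 'a::ab_group_add \<Rightarrow> 'a) \<Rightarrow> ('a \<Rightarrow> 'a \<Rightarrow> complex) \<Rightarrow> 'a form \<Rightarrow> 'a form \<Rightarrow> bool" where
  "reg_candidate sc ip t r \<longleftrightarrow> is_form sc ip r \<and> positive_form r \<and> closable_form sc ip r \<and>
     fdom r = fdom t \<and> (\<forall>x\<in>fdom t. Re (fval r x x) \<le> Re (fval t x x))"

definition regular_part ::
  "(complex \<Rightarrow> 'a::ab_group_add \<Rightarrow> 'a) \<Rightarrow> ('a \<Rightarrow> 'a \<Rightarrow> complex) \<Rightarrow> 'a form \<Rightarrow> 'a form" where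
  "regular_part sc ip t = (THE r. reg_candidate sc ip t r \<and>
     (\<forall>r'. reg_candidate sc ip t r' \<longrightarrow> (\<forall>x\<in>fdom t. Re (fval r' x x) \<le> Re (fval r x x))))"

definition obar_oplus ::
  "(complex \<Rightarrow> 'a::ab_group_add \<Rightarrow> 'a) \<Rightarrow> ('a \<Rightarrow> 'a \<Rightarrow> complex) \<Rightarrow> 'a form \<Rightarrow> 'a form \<Rightarrow> 'a form option" where
  "obar_oplus sc ip t s =
     (if oplus_defined ip t s \<and>
         regular_part sc ip (form_add t s) = form_add (regular_part sc ip t) (regular_part sc ip s)
      then Some (form_add t s) else None)"

definition gen_effect_algebra :: "'b set \<Rightarrow> ('b \<Rightarrow> 'b \<Rightarrow> 'b option) \<Rightarrow> 'b \<Rightarrow> bool" where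
  "gen_effect_algebra E op z \<longleftrightarrow>
     z \<in> E \<and>
     (\<forall>x\<in>E. \<forall>y\<in>E. \<forall>w. op x y = Some w \<longrightarrow> w \<in> E) \<and>
     (\<forall>x\<in>E. \<forall>y\<in>E. op x y = op y x) \<and>
     (\<forall>x\<in>E. \<forall>y\<in>E. \<forall>u\<in>E. \<forall>xy. op x y = Some xy \<and> op xy u \<noteq> None \<longrightarrow>
        (\<exists>yu. op y u = Some yu \<and> op x yu = op xy u)) \<and>
     (\<forall>x\<in>E. \<forall>y\<in>E. \<forall>u\<in>E. \<forall>yu. op y u = Some yu \<and> op x yu \<noteq> None \<longrightarrow>
        (\<exists>xy. op x y = Some xy \<and> op xy u = op x yu)) \<and>
     (\<forall>x\<in>E. op x z = Some x) \<and>
     (\<forall>x\<in>E. \<forall>y\<in>E. \<forall>u\<in>E. op x y \<noteq> None \<and> op x y = op x u \<longrightarrow> y = u) \<and>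
     (\<forall>x\<in>E. \<forall>y\<in>E. op x y = Some z \<longrightarrow> x = z \<and> y = z)"

end

theory Submission
  imports Defs
begin

text \<open>
  The regular part \<open>t\<^sub>r\<close> of a positive form \<open>t\<close> is computed explicitly: it is the restriction
  to \<open>D(t)\<close> of \<open>x \<mapsto> inf {lim t[x\<^sub>n] | (x\<^sub>n) t-Cauchy, x\<^sub>n \<rightarrow> x}\<close>.  This functional obeys
  the parallelogram law and is homogeneous, hence comes from a sesquilinear form (Jordan--von
  Neumann), and a diagonal argument shows that it is closed; any closable minorant of \<open>t\<close> lies
  below it.  Commutativity and the neutral element are
  immediate, and a decomposition into the zero form forces both summands to vanish by positivity.
  Cancellation reduces to the fact that a bounded form is determined by its values on a dense set.
  Associativity rests on superadditivity \<open>s\<^sub>r + u\<^sub>r \<le> (s + u)\<^sub>r\<close>: if \<open>(t + s + u)\<^sub>r\<close> splits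
  as \<open>t\<^sub>r + s\<^sub>r + u\<^sub>r\<close>, the intermediate inequalities must be equalities.
\<close>

lemma discriminant_bound:
  fixes A B c :: real
  assumes A: "0 \<le> A" and B: "0 \<le> B" and q: "\<And>r. 0 \<le> A + r * c + r\<^sup>2 * B"
  shows "c \<le> 2 * sqrt (A * B)"
proof (cases "B = 0")
  case True
  have "c = 0"
  proof (rule ccontr)
    assume "c \<noteq> 0"
    have "0 \<le> A + (- (A + 1) / c) * c + (- (A + 1) / c)\<^sup>2 * B" by (rule q)
    with True \<open>c \<noteq> 0\<close> show False by simp
  qed
  thus ?thesis using A B by simp
next
  case False
  hence Bp: "B > 0" using B by simp
  have "0 \<le> A + (- c / (2*B)) * c + (- c / (2*B))\<^sup>2 * B" by (rule q)
  hence "0 \<le> A - c\<^sup>2 / (4 * B)" using Bp by (simp add: field_simps power2_eq_square)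
  hence "c\<^sup>2 \<le> 4 * A * B" using Bp by (simp add: field_simps)
  hence "c \<le> sqrt (4 * (A * B))" by (intro real_le_rsqrt) simp
  thus ?thesis by (simp add: real_sqrt_mult)
qed

lemma tendsto_null_sandwich:
  "(f \<longlongrightarrow> (0::real)) F \<Longrightarrow> (\<And>k. 0 \<le> g k) \<Longrightarrow> (\<And>k. g k \<le> f k) \<Longrightarrow> (g \<longlongrightarrow> 0) F"
  by (rule real_tendsto_sandwich[of "\<lambda>_. 0" g F f]) auto

lemma geometric_sum_half_le: "(\<Sum>j\<in>{K..<K'}. (1/2::real)^j) \<le> 2 * (1/2)^K"
proof -
  have geom: "(\<Sum>j\<in>{K..<K + d}. (1/2::real)^j) = 2 * (1/2)^K - 2 * (1/2)^(K + d)" for d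
    by (induction d) (simp_all add: sum.atLeastLessThan_Suc)
  show ?thesis
  proof (cases "K \<le> K'")
    case True
    then obtain d where "K' = K + d" using le_Suc_ex by blast
    thus ?thesis using geom by simp
  qed simp
qed

lemma sqrt_quarter_power: "sqrt ((1/4::real)^j) = (1/2)^j"
  by (metis real_sqrt_power power_divide real_sqrt_divide real_sqrt_one real_sqrt_four)

lemma eventually_diagonal:
  assumes "\<And>K. eventually (P K) sequentially"
  obtains n :: "nat \<Rightarrow> nat" where "strict_mono n" "\<And>K. P K (n K)"
proof -
  obtain T where T: "\<And>K m. T K \<le> m \<Longrightarrow> P K m"
    using assms unfolding eventually_sequentially by metis
  define n where "n = rec_nat (T 0) (\<lambda>j v. max (v + 1) (T (Suc j)))"
  have n0: "n 0 = T 0" and nS: "n (Suc j) = max (n j + 1) (T (Suc j))" for j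
    unfolding n_def by simp_all
  have "strict_mono n" unfolding strict_mono_Suc_iff by (simp add: nS less_max_iff_disj)
  moreover have "T K \<le> n K" for K by (cases K) (simp_all add: n0 nS)
  ultimately show ?thesis using that T by blast
qed

locale hilbert_space =
  fixes sc :: "complex \<Rightarrow> 'a::ab_group_add \<Rightarrow> 'a" and ip :: "'a \<Rightarrow> 'a \<Rightarrow> complex"
  assumes hilbert: "complex_hilbert_space sc ip"
begin

lemma scale_add_right: "sc a (x + y) = sc a x + sc a y"
  and scale_add_left: "sc (a + b) x = sc a x + sc b x"
  and scale_scale: "sc a (sc b x) = sc (a * b) x"
  and scale_one [simp]: "sc 1 x = x"
  and inner_add_left: "ip (x + y) z = ip x z + ip y z"
  and inner_scale_left: "ip (sc a x) y = a * ip x y"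
  and inner_commute: "ip y x = cnj (ip x y)"
  and inner_self_real: "Im (ip x x) = 0"
  and inner_self_nonneg: "0 \<le> Re (ip x x)"
  and inner_self_eq_zero: "ip x x = 0 \<Longrightarrow> x = 0"
  and hilbert_complete:
    "\<forall>e>0. \<exists>N. \<forall>m\<ge>N. \<forall>k\<ge>N. hnorm ip (X m - X k) < e \<Longrightarrow> \<exists>L. (\<lambda>k. hnorm ip (X k - L)) \<longlonglongrightarrow> 0"
  using hilbert unfolding complex_hilbert_space_def by (metis (no_types))+

lemma scale_zero_left [simp]: "sc 0 x = 0"
  using scale_add_left[of 0 0 x] by simp

lemma scale_zero_right [simp]: "sc a 0 = 0"
  using scale_add_right[of a 0 0] by simp

lemma scale_minus_right: "sc a (- x) = - sc a x"
  by (metis add.right_inverse minus_unique scale_add_right scale_zero_right)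

lemma scale_diff_right: "sc a (x - y) = sc a x - sc a y"
  by (simp only: diff_conv_add_uminus scale_add_right scale_minus_right)

lemma scale_minus_left: "sc (- a) x = - sc a x"
  by (metis add.right_inverse minus_unique scale_add_left scale_zero_left)

lemma scale_minus_one: "sc (-1) x = - x"
  by (simp only: scale_minus_left scale_one)

lemma scale_two: "sc 2 x = x + x"
  using scale_add_left[of 1 1 x] by (simp only: one_add_one scale_one)

lemma inner_add_right: "ip z (x + y) = ip z x + ip z y"
  by (metis complex_cnj_add inner_add_left inner_commute)

lemma inner_scale_right: "ip x (sc a y) = cnj a * ip x y"
  by (metis complex_cnj_cnj complex_cnj_mult inner_commute inner_scale_left)

lemma subspace_zero: "lin_subspace sc D \<Longrightarrow> 0 \<in> D"
  and subspace_add: "lin_subspace sc D \<Longrightarrow> x \<in> D \<Longrightarrow> y \<in> D \<Longrightarrow> x + y \<in> D"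
  and subspace_scale: "lin_subspace sc D \<Longrightarrow> x \<in> D \<Longrightarrow> sc a x \<in> D"
  unfolding lin_subspace_def by blast+

lemma subspace_minus: "lin_subspace sc D \<Longrightarrow> x \<in> D \<Longrightarrow> - x \<in> D"
  by (metis subspace_scale scale_minus_one)

lemma subspace_diff: "lin_subspace sc D \<Longrightarrow> x \<in> D \<Longrightarrow> y \<in> D \<Longrightarrow> x - y \<in> D"
  by (metis diff_conv_add_uminus subspace_add subspace_minus)

lemma subspace_sum:
  "lin_subspace sc D \<Longrightarrow> (\<And>i. i \<in> I \<Longrightarrow> v i \<in> D) \<Longrightarrow> (\<Sum>i\<in>I. v i) \<in> D"
  by (induction I rule: infinite_finite_induct) (auto intro: subspace_zero subspace_add)

lemma subspace_Int: "lin_subspace sc A \<Longrightarrow> lin_subspace sc B \<Longrightarrow> lin_subspace sc (A \<inter> B)"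
  unfolding lin_subspace_def by blast

definition sesquilinear_on :: "'a set \<Rightarrow> ('a \<Rightarrow> 'a \<Rightarrow> complex) \<Rightarrow> bool" where
  "sesquilinear_on D f \<longleftrightarrow> lin_subspace sc D \<and>
     (\<forall>x\<in>D. \<forall>y\<in>D. \<forall>z\<in>D. f (x + y) z = f x z + f y z) \<and>
     (\<forall>x\<in>D. \<forall>y\<in>D. \<forall>z\<in>D. f x (y + z) = f x y + f x z) \<and>
     (\<forall>a. \<forall>x\<in>D. \<forall>y\<in>D. f (sc a x) y = a * f x y) \<and>
     (\<forall>a. \<forall>x\<in>D. \<forall>y\<in>D. f x (sc a y) = cnj a * f x y)"

lemma sesquilinear_on_subset:
  "sesquilinear_on D' f \<Longrightarrow> lin_subspace sc D \<Longrightarrow> D \<subseteq> D' \<Longrightarrow> sesquilinear_on D f"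
  unfolding sesquilinear_on_def by blast

lemma sesquilinear_on_add:
  "sesquilinear_on D f \<Longrightarrow> sesquilinear_on D g \<Longrightarrow> sesquilinear_on D (\<lambda>x y. f x y + g x y)"
  unfolding sesquilinear_on_def by (simp add: algebra_simps)

lemma sesquilinear_on_inner: "sesquilinear_on UNIV ip"
  unfolding sesquilinear_on_def lin_subspace_def
  using inner_add_left inner_add_right inner_scale_left inner_scale_right by blast

context
  fixes D f assumes S: "sesquilinear_on D f"
begin

lemma sesq_subspace: "lin_subspace sc D"
  and sesq_add_left: "x \<in> D \<Longrightarrow> y \<in> D \<Longrightarrow> z \<in> D \<Longrightarrow> f (x + y) z = f x z + f y z"
  and sesq_add_right: "x \<in> D \<Longrightarrow> y \<in> D \<Longrightarrow> z \<in> D \<Longrightarrow> f x (y + z) = f x y + f x z"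
  and sesq_scale_left: "x \<in> D \<Longrightarrow> y \<in> D \<Longrightarrow> f (sc a x) y = a * f x y"
  and sesq_scale_right: "x \<in> D \<Longrightarrow> y \<in> D \<Longrightarrow> f x (sc a y) = cnj a * f x y"
  using S unfolding sesquilinear_on_def by blast+

lemma sesq_zero_right: "y \<in> D \<Longrightarrow> f y 0 = 0"
  using sesq_scale_right[of y 0 0] sesq_subspace subspace_zero by simp

lemma sesq_minus_left: "x \<in> D \<Longrightarrow> y \<in> D \<Longrightarrow> f (- x) y = - f x y"
  using sesq_scale_left[of x y "-1"] by (simp add: scale_minus_one)

lemma sesq_minus_right: "x \<in> D \<Longrightarrow> y \<in> D \<Longrightarrow> f x (- y) = - f x y"
  using sesq_scale_right[of x y "-1"] by (simp add: scale_minus_one)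

lemma sesq_expand_add:
  "x \<in> D \<Longrightarrow> y \<in> D \<Longrightarrow> f (x + y) (x + y) = f x x + f x y + f y x + f y y"
  using sesq_add_left sesq_add_right sesq_subspace subspace_add by simp

lemma sesq_expand_diff:
  assumes x: "x \<in> D" and y: "y \<in> D"
  shows "f (x - y) (x - y) = f x x - f x y - f y x + f y y"
  using sesq_expand_add[of x "- y"] sesq_minus_left[of y] sesq_minus_right[of _ y]
    subspace_minus[OF sesq_subspace y] x y by simp

lemma sesq_scale_scale:
  assumes x: "x \<in> D" shows "f (sc a x) (sc a x) = of_real ((cmod a)\<^sup>2) * f x x"
proof -
  have "f (sc a x) (sc a x) = (a * cnj a) * f x x"
    using sesq_scale_left sesq_scale_right sesq_subspace subspace_scale x by simp
  thus ?thesis by (metis complex_norm_square)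
qed

lemma sesq_minus_minus: "x \<in> D \<Longrightarrow> f (- x) (- x) = f x x"
  using sesq_minus_left sesq_minus_right sesq_subspace subspace_minus by simp

end

lemma sesq_polarization:
  assumes S: "sesquilinear_on D f" and x: "x \<in> D" and y: "y \<in> D"
  shows "4 * f x y = f (x + y) (x + y) - f (x - y) (x - y)
     + \<i> * f (x + sc \<i> y) (x + sc \<i> y) - \<i> * f (x - sc \<i> y) (x - sc \<i> y)"
proof -
  have iy: "sc \<i> y \<in> D" using subspace_scale[OF sesq_subspace[OF S] y] .
  have "f x (sc \<i> y) = - \<i> * f x y" "f (sc \<i> y) x = \<i> * f y x" "f (sc \<i> y) (sc \<i> y) = f y y"
    using sesq_scale_left[OF S y x] sesq_scale_right[OF S x y] sesq_scale_scale[OF S y, of \<i>]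
    by simp_all
  thus ?thesis
    unfolding sesq_expand_add[OF S x y] sesq_expand_diff[OF S x y]
      sesq_expand_add[OF S x iy] sesq_expand_diff[OF S x iy]
    by (simp add: algebra_simps)
qed

lemma sesq_eq_if_diag_eq:
  assumes S1: "sesquilinear_on D f1" and S2: "sesquilinear_on D f2"
    and diag: "\<And>x. x \<in> D \<Longrightarrow> f1 x x = f2 x x" and x: "x \<in> D" and y: "y \<in> D"
  shows "f1 x y = f2 x y"
proof -
  have D: "lin_subspace sc D" using sesq_subspace[OF S1] .
  have "4 * f1 x y = 4 * f2 x y"
    unfolding sesq_polarization[OF S1 x y] sesq_polarization[OF S2 x y]
    using diag subspace_add[OF D] subspace_diff[OF D] subspace_scale[OF D] x y by simp
  thus ?thesis by simp
qed

definition quad :: "('a \<Rightarrow> 'a \<Rightarrow> complex) \<Rightarrow> 'a \<Rightarrow> real" where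
  "quad f x = Re (f x x)"

context
  fixes D f assumes S: "sesquilinear_on D f" and P: "\<forall>x\<in>D. 0 \<le> Re (f x x)"
begin

lemma quad_nonneg: "x \<in> D \<Longrightarrow> 0 \<le> quad f x"
  using P unfolding quad_def by blast

lemma quad_scale: "x \<in> D \<Longrightarrow> quad f (sc a x) = (cmod a)\<^sup>2 * quad f x"
  unfolding quad_def using sesq_scale_scale[OF S] by simp

lemma quad_parallelogram:
  "x \<in> D \<Longrightarrow> y \<in> D \<Longrightarrow> quad f (x + y) + quad f (x - y) = 2 * quad f x + 2 * quad f y"
  unfolding quad_def using sesq_expand_add[OF S] sesq_expand_diff[OF S] by simp

lemma quad_minus: "x \<in> D \<Longrightarrow> quad f (- x) = quad f x"
  unfolding quad_def using sesq_minus_minus[OF S] by simp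

lemma quad_diff_commute: "x \<in> D \<Longrightarrow> y \<in> D \<Longrightarrow> quad f (x - y) = quad f (y - x)"
  by (metis quad_minus minus_diff_eq sesq_subspace[OF S] subspace_diff)

lemma sqrt_quad_triangle:
  assumes x: "x \<in> D" and y: "y \<in> D"
  shows "sqrt (quad f (x + y)) \<le> sqrt (quad f x) + sqrt (quad f y)"
proof -
  let ?c = "Re (f x y + f y x)"
  have D: "lin_subspace sc D" using sesq_subspace[OF S] .
  have expand: "quad f (x + sc (of_real r) y) = quad f x + r * ?c + r\<^sup>2 * quad f y" for r
  proof -
    have ry: "sc (of_real r) y \<in> D" using D y subspace_scale by blast
    have "(cmod (of_real r))\<^sup>2 = r\<^sup>2" by simp
    thus ?thesis
      using sesq_expand_add[OF S x ry] sesq_scale_left[OF S y x] sesq_scale_right[OF S x y]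
        quad_scale[OF y, of "of_real r"]
      unfolding quad_def by (simp add: algebra_simps)
  qed
  have "?c \<le> 2 * sqrt (quad f x * quad f y)"
  proof (rule discriminant_bound)
    show "0 \<le> quad f x" "0 \<le> quad f y" using quad_nonneg x y by auto
    show "0 \<le> quad f x + r * ?c + r\<^sup>2 * quad f y" for r
      using quad_nonneg D x y subspace_scale subspace_add expand by metis
  qed
  hence "quad f (x + y) \<le> (sqrt (quad f x) + sqrt (quad f y))\<^sup>2"
    using sesq_expand_add[OF S x y] quad_nonneg[OF x] quad_nonneg[OF y]
    unfolding quad_def by (simp add: power2_eq_square real_sqrt_mult algebra_simps)
  thus ?thesis
    using quad_nonneg[OF x] quad_nonneg[OF y] by (intro real_le_lsqrt) auto
qed

lemma sqrt_quad_reverse_triangle: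
  assumes x: "x \<in> D" and y: "y \<in> D"
  shows "\<bar>sqrt (quad f x) - sqrt (quad f y)\<bar> \<le> sqrt (quad f (x - y))"
proof -
  have D: "lin_subspace sc D" using sesq_subspace[OF S] .
  have "sqrt (quad f x) \<le> sqrt (quad f (x - y)) + sqrt (quad f y)"
    using sqrt_quad_triangle[of "x - y" y] D subspace_diff x y by simp
  moreover have "sqrt (quad f y) \<le> sqrt (quad f (x - y)) + sqrt (quad f x)"
    using sqrt_quad_triangle[of "y - x" x] D subspace_diff x y quad_diff_commute by simp
  ultimately show ?thesis by (simp add: abs_le_iff)
qed

lemma sqrt_quad_sum:
  "finite I \<Longrightarrow> (\<And>i. i \<in> I \<Longrightarrow> v i \<in> D) \<Longrightarrow>
    sqrt (quad f (\<Sum>i\<in>I. v i)) \<le> (\<Sum>i\<in>I. sqrt (quad f (v i)))"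
proof (induction I rule: finite_induct)
  case empty
  show ?case using sesq_zero_right[OF S subspace_zero[OF sesq_subspace[OF S]]]
    by (simp add: quad_def)
next
  case (insert i I)
  have "(\<Sum>i\<in>I. v i) \<in> D" using subspace_sum[OF sesq_subspace[OF S], of I v] insert.prems by blast
  hence "sqrt (quad f (v i + (\<Sum>i\<in>I. v i))) \<le> sqrt (quad f (v i)) + sqrt (quad f (\<Sum>i\<in>I. v i))"
    using sqrt_quad_triangle insert.prems by blast
  moreover have "sqrt (quad f (\<Sum>i\<in>I. v i)) \<le> (\<Sum>i\<in>I. sqrt (quad f (v i)))"
    using insert.IH insert.prems by blast
  ultimately show ?case using insert.hyps by simp
qed

end

subsection \<open>Sesquilinear forms from quadratic functionals (Jordan--von Neumann)\<close>

lemma scale_half_add_diff: "sc (1/2) (u + v) + sc (1/2) (u - v) = u"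
proof -
  have "sc (1/2) (u + v) + sc (1/2) (u - v) = sc (1/2) (sc 2 u)"
    by (simp add: scale_add_right[symmetric] scale_two)
  thus ?thesis by (simp add: scale_scale)
qed

lemma scale_half_diff_diff: "sc (1/2) (u + v) - sc (1/2) (u - v) = v"
proof -
  have "sc (1/2) (u + v) - sc (1/2) (u - v) = sc (1/2) (sc 2 v)"
    by (simp add: scale_diff_right[symmetric] scale_two)
  thus ?thesis by (simp add: scale_scale)
qed

lemma scale_half_double: "sc (1/2) w + sc (1/2) w = w"
proof -
  have "sc (1/2 + 1/2) w = w" by simp
  thus ?thesis by (simp only: scale_add_left)
qed

lemma scale_ii: "sc \<i> (sc \<i> x) = - x"
  by (simp add: scale_scale scale_minus_one)

lemma scale_re_im: "sc a x = sc (of_real (Re a)) x + sc (of_real (Im a)) (sc \<i> x)"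
proof -
  have "a = of_real (Re a) + of_real (Im a) * \<i>" by (simp add: complex_eq_iff)
  hence "sc a x = sc (of_real (Re a) + of_real (Im a) * \<i>) x" by simp
  thus ?thesis by (simp add: scale_add_left scale_scale)
qed

context
  fixes D and g :: "'a \<Rightarrow> real"
  assumes subspace: "lin_subspace sc D"
    and nonneg: "\<And>x. x \<in> D \<Longrightarrow> 0 \<le> g x"
    and parallelogram:
      "\<And>x y. x \<in> D \<Longrightarrow> y \<in> D \<Longrightarrow> g (x + y) + g (x - y) = 2 * g x + 2 * g y"
    and homogeneous: "\<And>a x. x \<in> D \<Longrightarrow> g (sc a x) = (cmod a)\<^sup>2 * g x"
begin

definition polar_re :: "'a \<Rightarrow> 'a \<Rightarrow> real" where
  "polar_re x y = (g (x + y) - g (x - y)) / 4"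

lemmas zero_in = subspace_zero[OF subspace]
  and add_in = subspace_add[OF subspace]
  and diff_in = subspace_diff[OF subspace]
  and scale_in = subspace_scale[OF subspace]
  and minus_in = subspace_minus[OF subspace]

lemma g_zero: "g 0 = 0"
  using homogeneous[of 0 0] zero_in by simp

lemma g_minus: "x \<in> D \<Longrightarrow> g (- x) = g x"
  using homogeneous[of x "-1"] by (simp add: scale_minus_one)

lemma polar_re_sym: "x \<in> D \<Longrightarrow> y \<in> D \<Longrightarrow> polar_re x y = polar_re y x"
  unfolding polar_re_def using g_minus[of "x - y"] diff_in by (simp add: add.commute)

lemma polar_re_zero_left: "y \<in> D \<Longrightarrow> polar_re 0 y = 0"
  unfolding polar_re_def using g_minus by simp

lemma polar_re_self: "x \<in> D \<Longrightarrow> polar_re x x = g x"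
  unfolding polar_re_def using homogeneous[of x 2] g_zero by (simp add: scale_two)

lemma polar_re_midpoint:
  assumes x: "x \<in> D" and x': "x' \<in> D" and y: "y \<in> D"
  shows "polar_re (x + x') y + polar_re (x - x') y = 2 * polar_re x y"
proof -
  have 1: "g ((x + y) + x') + g ((x + y) - x') = 2 * g (x + y) + 2 * g x'"
    using parallelogram[OF add_in[OF x y] x'] .
  have 2: "g ((x - y) + x') + g ((x - y) - x') = 2 * g (x - y) + 2 * g x'"
    using parallelogram[OF diff_in[OF x y] x'] .
  have e: "(x + y) + x' = x + x' + y" "(x + y) - x' = x - x' + y"
    "(x - y) + x' = x + x' - y" "(x - y) - x' = x - x' - y" by (simp_all add: algebra_simps)
  have "polar_re (x + x') y + polar_re (x - x') y
     = ((g (x + x' + y) + g (x - x' + y)) - (g (x + x' - y) + g (x - x' - y))) / 4"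
    unfolding polar_re_def by (simp add: field_simps)
  also have "\<dots> = 2 * polar_re x y" using 1 2 unfolding e polar_re_def by simp
  finally show ?thesis .
qed

lemma polar_re_add_left:
  assumes u: "u \<in> D" and v: "v \<in> D" and y: "y \<in> D"
  shows "polar_re (u + v) y = polar_re u y + polar_re v y"
proof -
  let ?x = "sc (1/2) (u + v)" and ?x' = "sc (1/2) (u - v)"
  have x: "?x \<in> D" and x': "?x' \<in> D" using u v scale_in add_in diff_in by blast+
  have "polar_re (?x + ?x') y + polar_re (?x - ?x') y = 2 * polar_re ?x y"
    using polar_re_midpoint[OF x x' y] .
  also have "2 * polar_re ?x y = polar_re (?x + ?x) y"
    using polar_re_midpoint[OF x x y] polar_re_zero_left[OF y] by simp
  finally show ?thesis unfolding scale_half_add_diff scale_half_diff_diff scale_half_double by simp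
qed

lemma polar_re_minus_left: "x \<in> D \<Longrightarrow> y \<in> D \<Longrightarrow> polar_re (- x) y = - polar_re x y"
  using polar_re_add_left[of x "- x" y] polar_re_zero_left minus_in by simp

lemma polar_re_nat: "x \<in> D \<Longrightarrow> y \<in> D \<Longrightarrow> polar_re (sc (of_nat n) x) y = of_nat n * polar_re x y"
proof (induction n)
  case 0 then show ?case using polar_re_zero_left by simp
next
  case (Suc n)
  have "sc (of_nat (Suc n)) x = sc (of_nat n) x + x"
    by (metis scale_add_left scale_one of_nat_Suc add.commute)
  thus ?case using polar_re_add_left scale_in Suc by (simp add: algebra_simps)
qed

lemma polar_re_int: "x \<in> D \<Longrightarrow> y \<in> D \<Longrightarrow> polar_re (sc (of_int k) x) y = of_int k * polar_re x y"
proof (cases "k \<ge> 0")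
  case True
  then obtain n where "k = int n" by (metis nonneg_int_cases)
  thus "x \<in> D \<Longrightarrow> y \<in> D \<Longrightarrow> ?thesis" using polar_re_nat by simp
next
  case False
  define n where "n = nat (- k)"
  have n: "k = - int n" using False unfolding n_def by simp
  assume x: "x \<in> D" and y: "y \<in> D"
  have "sc (of_int k) x = - sc (of_nat n) x" using n by (simp add: scale_minus_left)
  thus ?thesis using polar_re_minus_left polar_re_nat scale_in x y n by simp
qed

lemma polar_re_bound: "x \<in> D \<Longrightarrow> y \<in> D \<Longrightarrow> \<bar>polar_re x y\<bar> \<le> (g x + g y) / 2"
  unfolding polar_re_def using parallelogram[of x y] nonneg[of "x + y"] nonneg[of "x - y"] add_in diff_in
  by (simp add: abs_le_iff)

text \<open>The map \<open>s \<mapsto> polar_re (sc s x) y - s * polar_re x y\<close> is additive, vanishes at \<open>1\<close> and is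
  bounded on \<open>[0, 1]\<close>; its value at \<open>n * r\<close> is therefore bounded uniformly in \<open>n\<close>,
  which forces it to vanish.\<close>
lemma polar_re_real:
  assumes x: "x \<in> D" and y: "y \<in> D"
  shows "polar_re (sc (of_real r) x) y = r * polar_re x y"
proof -
  define \<psi> where "\<psi> s = polar_re (sc (of_real s) x) y - s * polar_re x y" for s
  have add: "\<psi> (s + s') = \<psi> s + \<psi> s'" for s s'
  proof -
    have "sc (of_real (s + s')) x = sc (of_real s) x + sc (of_real s') x"
      by (simp add: scale_add_left)
    hence "polar_re (sc (of_real (s + s')) x) y
        = polar_re (sc (of_real s) x) y + polar_re (sc (of_real s') x) y"
      by (simp only: polar_re_add_left[OF scale_in[OF x] scale_in[OF x] y])
    thus ?thesis unfolding \<psi>_def by (simp add: algebra_simps)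
  qed
  have int: "\<psi> (of_int k * s) = of_int k * \<psi> s" for k s
  proof -
    have "sc (of_real (of_int k * s)) x = sc (of_int k) (sc (of_real s) x)"
      by (simp add: scale_scale)
    hence "polar_re (sc (of_real (of_int k * s)) x) y = of_int k * polar_re (sc (of_real s) x) y"
      by (simp only: polar_re_int[OF scale_in[OF x] y])
    thus ?thesis unfolding \<psi>_def by (simp add: algebra_simps)
  qed
  define B where "B = (g x + g y) / 2 + \<bar>polar_re x y\<bar>"
  have bound: "\<bar>\<psi> s\<bar> \<le> B" if s: "0 \<le> s" "s \<le> 1" for s
  proof -
    have "\<bar>polar_re (sc (of_real s) x) y\<bar> \<le> (g (sc (of_real s) x) + g y) / 2"
      using polar_re_bound scale_in x y by blast
    moreover have "g (sc (of_real s) x) \<le> g x"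
      using homogeneous[OF x, of "of_real s"] nonneg[OF x] s
      by (simp add: mult_left_le_one_le power_le_one)
    moreover have "\<bar>s * polar_re x y\<bar> \<le> \<bar>polar_re x y\<bar>"
      using s by (simp add: abs_mult mult_left_le_one_le)
    moreover have "\<bar>\<psi> s\<bar> \<le> \<bar>polar_re (sc (of_real s) x) y\<bar> + \<bar>s * polar_re x y\<bar>"
      unfolding \<psi>_def by (rule abs_triangle_ineq4)
    ultimately show ?thesis unfolding B_def by argo
  qed
  have scaled: "real n * \<bar>\<psi> r\<bar> \<le> B" for n :: nat
  proof -
    define k where "k = \<lfloor>real n * r\<rfloor>"
    have "\<psi> (real n * r) = real n * \<psi> r" using int[of "int n" r] by simp
    moreover have "\<psi> (real n * r) = \<psi> (real n * r - of_int k)"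
      using add[of "real n * r - of_int k" "of_int k * 1"] int[of k 1] by (simp add: \<psi>_def)
    moreover have "\<bar>\<psi> (real n * r - of_int k)\<bar> \<le> B"
      unfolding k_def by (rule bound) linarith+
    ultimately show ?thesis by (simp add: abs_mult)
  qed
  have "\<psi> r = 0"
  proof (rule ccontr)
    assume "\<psi> r \<noteq> 0"
    then obtain n :: nat where "B / \<bar>\<psi> r\<bar> < real n" using reals_Archimedean2 by blast
    with \<open>\<psi> r \<noteq> 0\<close> have "B < real n * \<bar>\<psi> r\<bar>" by (simp add: field_simps)
    with scaled[of n] show False by simp
  qed
  thus ?thesis unfolding \<psi>_def by simp
qed

lemma polar_re_add_right:
  "x \<in> D \<Longrightarrow> y \<in> D \<Longrightarrow> z \<in> D \<Longrightarrow> polar_re x (y + z) = polar_re x y + polar_re x z"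
  using polar_re_sym polar_re_add_left add_in by metis

lemma polar_re_ii: "x \<in> D \<Longrightarrow> y \<in> D \<Longrightarrow> polar_re (sc \<i> x) (sc \<i> y) = polar_re x y"
  unfolding polar_re_def using homogeneous add_in diff_in
  by (simp add: scale_add_right[symmetric] scale_diff_right[symmetric])

lemma polar_re_i_left:
  assumes x: "x \<in> D" and y: "y \<in> D"
  shows "polar_re (sc \<i> x) y = - polar_re x (sc \<i> y)"
proof -
  have "polar_re (sc \<i> x) y = polar_re (sc \<i> (sc \<i> x)) (sc \<i> y)"
    using polar_re_ii scale_in x y by simp
  also have "\<dots> = - polar_re x (sc \<i> y)"
    unfolding scale_ii using polar_re_minus_left scale_in x y by blast
  finally show ?thesis .
qed

definition polar_form :: "'a \<Rightarrow> 'a \<Rightarrow> complex" where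
  "polar_form x y = Complex (polar_re x y) (polar_re x (sc \<i> y))"

lemma polar_form_cnj:
  assumes x: "x \<in> D" and y: "y \<in> D"
  shows "polar_form y x = cnj (polar_form x y)"
proof -
  have "polar_re y (sc \<i> x) = - polar_re x (sc \<i> y)"
    using polar_re_sym polar_re_i_left x y scale_in by metis
  thus ?thesis unfolding polar_form_def using polar_re_sym x y by (simp add: complex_eq_iff)
qed

lemma polar_form_scale_left:
  assumes x: "x \<in> D" and y: "y \<in> D"
  shows "polar_form (sc a x) y = a * polar_form x y"
proof -
  have ix: "sc \<i> x \<in> D" and iy: "sc \<i> y \<in> D" using scale_in x y by blast+
  have p: "sc (of_real (Re a)) x \<in> D" "sc (of_real (Im a)) (sc \<i> x) \<in> D" using scale_in x ix by blast+
  have "polar_re (sc a x) y = Re a * polar_re x y - Im a * polar_re x (sc \<i> y)"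
    using polar_re_add_left[OF p y] polar_re_real[OF x y] polar_re_real[OF ix y] polar_re_i_left[OF x y]
      scale_re_im[of a x] by simp
  moreover have "polar_re (sc a x) (sc \<i> y) = Re a * polar_re x (sc \<i> y) + Im a * polar_re x y"
    using polar_re_add_left[OF p iy] polar_re_real[OF x iy] polar_re_real[OF ix iy] polar_re_ii[OF x y]
      scale_re_im[of a x] by simp
  ultimately show ?thesis unfolding polar_form_def by (simp add: complex_eq_iff)
qed

lemma polar_form_scale_right:
  assumes x: "x \<in> D" and y: "y \<in> D"
  shows "polar_form x (sc a y) = cnj a * polar_form x y"
proof -
  have "polar_form x (sc a y) = cnj (polar_form (sc a y) x)"
    using polar_form_cnj[OF scale_in[OF y] x] by simp
  thus ?thesis using polar_form_scale_left[OF y x] polar_form_cnj[OF x y] by simp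
qed

lemma polar_form_add_left:
  "x \<in> D \<Longrightarrow> y \<in> D \<Longrightarrow> z \<in> D \<Longrightarrow> polar_form (x + y) z = polar_form x z + polar_form y z"
  unfolding polar_form_def using polar_re_add_left scale_in by (simp add: complex_eq_iff)

lemma polar_form_add_right:
  "x \<in> D \<Longrightarrow> y \<in> D \<Longrightarrow> z \<in> D \<Longrightarrow> polar_form x (y + z) = polar_form x y + polar_form x z"
  unfolding polar_form_def using polar_re_add_right scale_in by (simp add: complex_eq_iff scale_add_right)

lemma polar_form_sesquilinear: "sesquilinear_on D polar_form"
  unfolding sesquilinear_on_def
  using subspace polar_form_add_left polar_form_add_right polar_form_scale_left polar_form_scale_right
  by simp

lemma polar_form_self:
  assumes x: "x \<in> D" shows "polar_form x x = of_real (g x)"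
proof -
  have "sc (- \<i>) (x + sc \<i> x) = x - sc \<i> x"
    by (simp add: scale_add_right scale_scale scale_minus_left)
  hence "g (x - sc \<i> x) = g (x + sc \<i> x)"
    using homogeneous[of "x + sc \<i> x" "- \<i>"] add_in scale_in x by simp
  hence "polar_re x (sc \<i> x) = 0" unfolding polar_re_def by simp
  thus ?thesis unfolding polar_form_def using polar_re_self[OF x] by (simp add: complex_eq_iff)
qed

end

abbreviation vnorm :: "'a \<Rightarrow> real" where "vnorm x \<equiv> hnorm ip x"

lemma inner_nonneg_on: "\<forall>x\<in>UNIV. 0 \<le> Re (ip x x)"
  using inner_self_nonneg by blast

lemma vnorm_eq_sqrt_quad: "vnorm x = sqrt (quad ip x)"
  unfolding hnorm_def quad_def ..

lemma vnorm_nonneg: "0 \<le> vnorm x"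
  unfolding hnorm_def using inner_self_nonneg[of x] by simp

lemma vnorm_triangle: "vnorm (x + y) \<le> vnorm x + vnorm y"
  unfolding vnorm_eq_sqrt_quad using sqrt_quad_triangle[OF sesquilinear_on_inner inner_nonneg_on] by blast

lemma vnorm_scale: "vnorm (sc a x) = cmod a * vnorm x"
  unfolding vnorm_eq_sqrt_quad using quad_scale[OF sesquilinear_on_inner inner_nonneg_on]
  by (simp add: real_sqrt_mult)

lemma vnorm_minus_commute: "vnorm (x - y) = vnorm (y - x)"
  unfolding vnorm_eq_sqrt_quad using quad_diff_commute[OF sesquilinear_on_inner inner_nonneg_on] by simp

lemma vnorm_zero [simp]: "vnorm 0 = 0"
  unfolding hnorm_def using inner_scale_left[of 0 0 0] by simp

lemma vnorm_eq_zero: "vnorm x = 0 \<Longrightarrow> x = 0"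
  unfolding hnorm_def using inner_self_real inner_self_nonneg inner_self_eq_zero
  by (simp add: complex_eq_iff)

lemma vnorm_triangle_diff: "vnorm (x - z) \<le> vnorm (x - y) + vnorm (y - z)"
  using vnorm_triangle[of "x - y" "y - z"] by simp

lemma vnorm_sum: "finite I \<Longrightarrow> vnorm (\<Sum>i\<in>I. v i) \<le> (\<Sum>i\<in>I. vnorm (v i))"
  unfolding vnorm_eq_sqrt_quad using sqrt_quad_sum[OF sesquilinear_on_inner inner_nonneg_on] by blast

definition hconverges :: "(nat \<Rightarrow> 'a) \<Rightarrow> 'a \<Rightarrow> bool" where
  "hconverges X x \<longleftrightarrow> (\<lambda>k. vnorm (X k - x)) \<longlonglongrightarrow> 0"

definition hcauchy :: "(nat \<Rightarrow> 'a) \<Rightarrow> bool" where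
  "hcauchy X \<longleftrightarrow> (\<forall>e>0. \<exists>N. \<forall>m\<ge>N. \<forall>k\<ge>N. vnorm (X m - X k) < e)"

lemma hcauchy_hconverges: "hcauchy X \<Longrightarrow> \<exists>x. hconverges X x"
  unfolding hcauchy_def hconverges_def using hilbert_complete by blast

lemma hconverges_const: "hconverges (\<lambda>k. x) x"
  unfolding hconverges_def by simp

lemma hconverges_add:
  assumes "hconverges X x" "hconverges Y y" shows "hconverges (\<lambda>k. X k + Y k) (x + y)"
  unfolding hconverges_def
proof (rule tendsto_null_sandwich[where f="\<lambda>k. vnorm (X k - x) + vnorm (Y k - y)"])
  show "(\<lambda>k. vnorm (X k - x) + vnorm (Y k - y)) \<longlonglongrightarrow> 0"
    using tendsto_add[OF assms[unfolded hconverges_def]] by simp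
  show "0 \<le> vnorm (X k + Y k - (x + y))" for k by (rule vnorm_nonneg)
  show "vnorm (X k + Y k - (x + y)) \<le> vnorm (X k - x) + vnorm (Y k - y)" for k
    using vnorm_triangle[of "X k - x" "Y k - y"] by (simp add: algebra_simps)
qed

lemma hconverges_scale:
  assumes "hconverges X x" shows "hconverges (\<lambda>k. sc a (X k)) (sc a x)"
proof -
  have "(\<lambda>k. cmod a * vnorm (X k - x)) \<longlonglongrightarrow> cmod a * 0"
    using assms unfolding hconverges_def by (intro tendsto_mult tendsto_const)
  thus ?thesis unfolding hconverges_def by (simp add: scale_diff_right[symmetric] vnorm_scale)
qed

lemma hconverges_diff:
  assumes "hconverges X x" "hconverges Y y" shows "hconverges (\<lambda>k. X k - Y k) (x - y)"
  using hconverges_add[OF assms(1) hconverges_scale[OF assms(2), of "-1"]]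
  by (simp add: scale_minus_one)

lemma hconverges_sum:
  "(\<And>i. i \<in> I \<Longrightarrow> hconverges (X i) (x i)) \<Longrightarrow> hconverges (\<lambda>n. \<Sum>i\<in>I. X i n) (\<Sum>i\<in>I. x i)"
  by (induction I rule: infinite_finite_induct) (auto intro: hconverges_add simp: hconverges_const)

lemma hconverges_subseq: "hconverges X x \<Longrightarrow> strict_mono r \<Longrightarrow> hconverges (\<lambda>k. X (r k)) x"
  unfolding hconverges_def using LIMSEQ_subseq_LIMSEQ[of "\<lambda>k. vnorm (X k - x)" 0 r] by (simp add: o_def)

lemma hconverges_unique:
  assumes "hconverges X x" "hconverges X y" shows "x = y"
proof -
  have "(\<lambda>k. vnorm (X k - x) + vnorm (X k - y)) \<longlonglongrightarrow> 0"
    using tendsto_add[OF assms[unfolded hconverges_def]] by simp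
  moreover have "vnorm (x - y) \<le> vnorm (X k - x) + vnorm (X k - y)" for k
    using vnorm_triangle_diff[where x=x and y="X k" and z=y] vnorm_minus_commute[of x "X k"] by linarith
  ultimately have "vnorm (x - y) \<le> 0"
    by (intro LIMSEQ_le_const[of "\<lambda>k. vnorm (X k - x) + vnorm (X k - y)"]) auto
  hence "vnorm (x - y) = 0" using vnorm_nonneg by (metis antisym)
  thus ?thesis using vnorm_eq_zero[of "x - y"] by simp
qed

lemma hconverges_imp_hcauchy:
  assumes "hconverges X x" shows "hcauchy X"
  unfolding hcauchy_def
proof (intro allI impI)
  fix e :: real assume "e > 0"
  hence "eventually (\<lambda>k. vnorm (X k - x) < e / 2) sequentially"
    using order_tendstoD(2)[OF assms[unfolded hconverges_def], of "e / 2"] by simp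
  then obtain N where N: "\<And>k. N \<le> k \<Longrightarrow> vnorm (X k - x) < e / 2"
    unfolding eventually_sequentially by blast
  show "\<exists>N. \<forall>m\<ge>N. \<forall>k\<ge>N. vnorm (X m - X k) < e"
  proof (intro exI allI impI)
    fix m k assume "N \<le> m" "N \<le> k"
    thus "vnorm (X m - X k) < e"
      using N[of m] N[of k] vnorm_triangle_diff[where x="X m" and y=x and z="X k"]
        vnorm_minus_commute[of x "X k"] by linarith
  qed
qed

lemma form_sesquilinear: "is_form sc ip t \<Longrightarrow> sesquilinear_on (fdom t) (fval t)"
  unfolding is_form_def sesquilinear_on_def by blast

lemma positive_form_nonneg: "positive_form t \<Longrightarrow> \<forall>x\<in>fdom t. 0 \<le> Re (fval t x x)"
  unfolding positive_form_def by blast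

lemma form_subspace: "is_form sc ip t \<Longrightarrow> lin_subspace sc (fdom t)"
  using sesq_subspace[OF form_sesquilinear] .

lemma form_dense: "is_form sc ip t \<Longrightarrow> dense_in ip (fdom t)"
  unfolding is_form_def by blast

lemma form_quad_nonneg: "is_form sc ip t \<Longrightarrow> positive_form t \<Longrightarrow> x \<in> fdom t \<Longrightarrow> 0 \<le> quad (fval t) x"
  using quad_nonneg[OF form_sesquilinear positive_form_nonneg] .

subsection \<open>The closure of a positive form\<close>

text \<open>The quadratic form of the closure: \<open>x\<close> lies in \<open>closure_dom t\<close> if it is the limit in \<open>H\<close>
  of a \<open>t\<close>-Cauchy sequence, and \<open>closure_quad t x\<close> is the infimum of \<open>lim t[X n]\<close> over all such
  sequences.  Its restriction to \<open>D(t)\<close> is the regular part \<open>t\<^sub>r\<close>.\<close>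

definition form_cauchy :: "'a form \<Rightarrow> (nat \<Rightarrow> 'a) \<Rightarrow> bool" where
  "form_cauchy t X \<longleftrightarrow> (\<forall>n. X n \<in> fdom t) \<and>
     (\<forall>e>0. \<exists>N. \<forall>m\<ge>N. \<forall>n\<ge>N. sqrt (quad (fval t) (X m - X n)) < e)"

definition form_approx :: "'a form \<Rightarrow> 'a \<Rightarrow> (nat \<Rightarrow> 'a) \<Rightarrow> bool" where
  "form_approx t x X \<longleftrightarrow> form_cauchy t X \<and> hconverges X x"

definition limit_quad :: "'a form \<Rightarrow> (nat \<Rightarrow> 'a) \<Rightarrow> real" where
  "limit_quad t X = lim (\<lambda>n. quad (fval t) (X n))"

definition closure_dom :: "'a form \<Rightarrow> 'a set" where
  "closure_dom t = {x. \<exists>X. form_approx t x X}"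

definition closure_quad :: "'a form \<Rightarrow> 'a \<Rightarrow> real" where
  "closure_quad t x = Inf {limit_quad t X | X. form_approx t x X}"

lemma form_cauchy_in: "form_cauchy t X \<Longrightarrow> X n \<in> fdom t"
  unfolding form_cauchy_def by blast

lemma form_cauchy_eventually:
  "form_cauchy t X \<Longrightarrow> e > 0 \<Longrightarrow>
    eventually (\<lambda>n. \<forall>a\<ge>n. \<forall>b\<ge>n. sqrt (quad (fval t) (X a - X b)) < e) sequentially"
  unfolding form_cauchy_def eventually_sequentially by (meson order_trans)

context
  fixes t assumes form: "is_form sc ip t" and pos: "positive_form t"
begin

lemmas t_sesq = form_sesquilinear[OF form]
  and t_nonneg = positive_form_nonneg[OF pos]
  and t_subspace = form_subspace[OF form]
  and t_quad_nonneg = form_quad_nonneg[OF form pos]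

lemma limit_quad_tendsto:
  assumes X: "form_cauchy t X"
  shows "(\<lambda>n. quad (fval t) (X n)) \<longlonglongrightarrow> limit_quad t X"
proof -
  have in_t: "\<And>n. X n \<in> fdom t" using X form_cauchy_in by blast
  have "Cauchy (\<lambda>n. sqrt (quad (fval t) (X n)))"
  proof (rule metric_CauchyI)
    fix e :: real assume "e > 0"
    then obtain N where N: "\<forall>m\<ge>N. \<forall>n\<ge>N. sqrt (quad (fval t) (X m - X n)) < e"
      using X unfolding form_cauchy_def by blast
    show "\<exists>M. \<forall>m\<ge>M. \<forall>n\<ge>M. dist (sqrt (quad (fval t) (X m))) (sqrt (quad (fval t) (X n))) < e"
      using N sqrt_quad_reverse_triangle[OF t_sesq t_nonneg in_t in_t]
      unfolding dist_real_def by (meson le_less_trans)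
  qed
  then obtain L where L: "(\<lambda>n. sqrt (quad (fval t) (X n))) \<longlonglongrightarrow> L"
    using Cauchy_convergent_iff convergent_def by blast
  have "(\<lambda>n. (sqrt (quad (fval t) (X n)))\<^sup>2) \<longlonglongrightarrow> L\<^sup>2" by (intro tendsto_power L)
  hence "(\<lambda>n. quad (fval t) (X n)) \<longlonglongrightarrow> L\<^sup>2" using t_quad_nonneg[OF in_t] by simp
  thus ?thesis unfolding limit_quad_def by (simp add: limI)
qed

lemma limit_quad_nonneg: "form_cauchy t X \<Longrightarrow> 0 \<le> limit_quad t X"
  by (rule LIMSEQ_le_const[OF limit_quad_tendsto]) (auto intro: t_quad_nonneg form_cauchy_in)

lemma limit_quad_le: "form_cauchy t X \<Longrightarrow> \<forall>n\<ge>N. quad (fval t) (X n) \<le> c \<Longrightarrow> limit_quad t X \<le> c"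
  by (rule LIMSEQ_le_const2[OF limit_quad_tendsto]) auto

lemma form_cauchy_const: "x \<in> fdom t \<Longrightarrow> form_cauchy t (\<lambda>n. x)"
  unfolding form_cauchy_def using sesq_zero_right[OF t_sesq subspace_zero[OF t_subspace]]
  by (auto simp: quad_def)

lemma limit_quad_const: "limit_quad t (\<lambda>n. x) = quad (fval t) x"
  unfolding limit_quad_def by simp

lemma form_cauchy_add:
  assumes X: "form_cauchy t X" and Y: "form_cauchy t Y"
  shows "form_cauchy t (\<lambda>n. X n + Y n)"
  unfolding form_cauchy_def
proof (intro conjI allI impI)
  show "X n + Y n \<in> fdom t" for n using form_cauchy_in X Y subspace_add[OF t_subspace] by blast
  fix e :: real assume "e > 0"
  then obtain N1 N2 where N1: "\<forall>m\<ge>N1. \<forall>n\<ge>N1. sqrt (quad (fval t) (X m - X n)) < e/2"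
    and N2: "\<forall>m\<ge>N2. \<forall>n\<ge>N2. sqrt (quad (fval t) (Y m - Y n)) < e/2"
    using X Y unfolding form_cauchy_def by (meson half_gt_zero)
  show "\<exists>N. \<forall>m\<ge>N. \<forall>n\<ge>N. sqrt (quad (fval t) (X m + Y m - (X n + Y n))) < e"
  proof (intro exI allI impI)
    fix m n assume mn: "max N1 N2 \<le> m" "max N1 N2 \<le> n"
    have eq: "X m + Y m - (X n + Y n) = (X m - X n) + (Y m - Y n)" by (simp add: algebra_simps)
    have "X m - X n \<in> fdom t" "Y m - Y n \<in> fdom t"
      using form_cauchy_in X Y subspace_diff[OF t_subspace] by blast+
    hence "sqrt (quad (fval t) (X m + Y m - (X n + Y n)))
        \<le> sqrt (quad (fval t) (X m - X n)) + sqrt (quad (fval t) (Y m - Y n))"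
      unfolding eq by (rule sqrt_quad_triangle[OF t_sesq t_nonneg])
    thus "sqrt (quad (fval t) (X m + Y m - (X n + Y n))) < e" using N1 N2 mn by fastforce
  qed
qed

lemma form_cauchy_scale:
  assumes X: "form_cauchy t X" shows "form_cauchy t (\<lambda>n. sc a (X n))"
  unfolding form_cauchy_def
proof (intro conjI allI impI)
  show "sc a (X n) \<in> fdom t" for n using form_cauchy_in X subspace_scale[OF t_subspace] by blast
  fix e :: real assume e: "e > 0"
  hence "e / (cmod a + 1) > 0" by (simp add: add_nonneg_pos)
  then obtain N where N: "\<forall>m\<ge>N. \<forall>n\<ge>N. sqrt (quad (fval t) (X m - X n)) < e / (cmod a + 1)"
    using X unfolding form_cauchy_def by blast
  show "\<exists>N. \<forall>m\<ge>N. \<forall>n\<ge>N. sqrt (quad (fval t) (sc a (X m) - sc a (X n))) < e"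
  proof (intro exI allI impI)
    fix m n assume mn: "N \<le> m" "N \<le> n"
    have d: "X m - X n \<in> fdom t" using form_cauchy_in X subspace_diff[OF t_subspace] by blast
    have "sqrt (quad (fval t) (sc a (X m) - sc a (X n))) = cmod a * sqrt (quad (fval t) (X m - X n))"
      unfolding scale_diff_right[symmetric] using quad_scale[OF t_sesq t_nonneg d]
      by (simp add: real_sqrt_mult)
    also have "\<dots> \<le> (cmod a + 1) * sqrt (quad (fval t) (X m - X n))"
      using t_quad_nonneg[OF d] by (intro mult_right_mono) auto
    also have "\<dots> < (cmod a + 1) * (e / (cmod a + 1))"
      using N mn by (intro mult_strict_left_mono) (auto simp: add_nonneg_pos)
    also have "\<dots> = e"
    proof -
      have "cmod a + 1 \<noteq> 0" using norm_ge_zero[of a] by linarith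
      thus ?thesis by simp
    qed
    finally show "sqrt (quad (fval t) (sc a (X m) - sc a (X n))) < e" .
  qed
qed

lemma form_cauchy_diff: "form_cauchy t X \<Longrightarrow> form_cauchy t Y \<Longrightarrow> form_cauchy t (\<lambda>n. X n - Y n)"
  using form_cauchy_add[of X "\<lambda>n. sc (-1) (Y n)"] form_cauchy_scale[of Y "-1"]
  by (simp add: scale_minus_one)

lemma form_cauchy_sum:
  "(\<And>i. i \<in> I \<Longrightarrow> form_cauchy t (X i)) \<Longrightarrow> form_cauchy t (\<lambda>n. \<Sum>i\<in>I. X i n)"
  by (induction I rule: infinite_finite_induct)
    (auto intro: form_cauchy_add form_cauchy_const subspace_zero[OF t_subspace])

lemma form_cauchy_reindex:
  assumes X: "form_cauchy t X" and r: "\<And>k. k \<le> r k" shows "form_cauchy t (\<lambda>k. X (r k))"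
  unfolding form_cauchy_def
proof (intro conjI allI impI)
  show "X (r n) \<in> fdom t" for n using form_cauchy_in X by blast
  fix e :: real assume "e > 0"
  then obtain N where "\<forall>m\<ge>N. \<forall>n\<ge>N. sqrt (quad (fval t) (X m - X n)) < e"
    using X unfolding form_cauchy_def by blast
  thus "\<exists>N. \<forall>m\<ge>N. \<forall>n\<ge>N. sqrt (quad (fval t) (X (r m) - X (r n))) < e"
    by (metis r order_trans)
qed

lemma limit_quad_parallelogram:
  assumes X: "form_cauchy t X" and Y: "form_cauchy t Y"
  shows "limit_quad t (\<lambda>n. X n + Y n) + limit_quad t (\<lambda>n. X n - Y n) = 2 * limit_quad t X + 2 * limit_quad t Y"
proof -
  have "(\<lambda>n. quad (fval t) (X n + Y n) + quad (fval t) (X n - Y n))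
      \<longlonglongrightarrow> limit_quad t (\<lambda>n. X n + Y n) + limit_quad t (\<lambda>n. X n - Y n)"
    using limit_quad_tendsto[OF form_cauchy_add[OF X Y]] limit_quad_tendsto[OF form_cauchy_diff[OF X Y]]
    by (rule tendsto_add)
  moreover have "(\<lambda>n. quad (fval t) (X n + Y n) + quad (fval t) (X n - Y n))
      = (\<lambda>n. 2 * quad (fval t) (X n) + 2 * quad (fval t) (Y n))"
    using quad_parallelogram[OF t_sesq t_nonneg] form_cauchy_in X Y by blast
  moreover have "(\<lambda>n. 2 * quad (fval t) (X n) + 2 * quad (fval t) (Y n)) \<longlonglongrightarrow> 2 * limit_quad t X + 2 * limit_quad t Y"
    using limit_quad_tendsto[OF X] limit_quad_tendsto[OF Y] by (intro tendsto_add tendsto_mult tendsto_const)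
  ultimately show ?thesis using LIMSEQ_unique by metis
qed

lemma limit_quad_scale:
  assumes X: "form_cauchy t X" shows "limit_quad t (\<lambda>n. sc a (X n)) = (cmod a)\<^sup>2 * limit_quad t X"
proof -
  have "(\<lambda>n. quad (fval t) (sc a (X n))) = (\<lambda>n. (cmod a)\<^sup>2 * quad (fval t) (X n))"
    using quad_scale[OF t_sesq t_nonneg] form_cauchy_in X by blast
  moreover have "(\<lambda>n. (cmod a)\<^sup>2 * quad (fval t) (X n)) \<longlonglongrightarrow> (cmod a)\<^sup>2 * limit_quad t X"
    using limit_quad_tendsto[OF X] by (intro tendsto_mult tendsto_const)
  ultimately show ?thesis
    using limit_quad_tendsto[OF form_cauchy_scale[OF X]] LIMSEQ_unique by metis
qed

lemma form_approx_add: "form_approx t x X \<Longrightarrow> form_approx t y Y \<Longrightarrow> form_approx t (x + y) (\<lambda>n. X n + Y n)"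
  unfolding form_approx_def using form_cauchy_add hconverges_add by blast

lemma form_approx_diff: "form_approx t x X \<Longrightarrow> form_approx t y Y \<Longrightarrow> form_approx t (x - y) (\<lambda>n. X n - Y n)"
  unfolding form_approx_def using form_cauchy_diff hconverges_diff by blast

lemma form_approx_scale: "form_approx t x X \<Longrightarrow> form_approx t (sc a x) (\<lambda>n. sc a (X n))"
  unfolding form_approx_def using form_cauchy_scale hconverges_scale by blast

lemma form_approx_const: "x \<in> fdom t \<Longrightarrow> form_approx t x (\<lambda>n. x)"
  unfolding form_approx_def using form_cauchy_const hconverges_const by blast

lemma dom_subset_closure_dom: "fdom t \<subseteq> closure_dom t"
  unfolding closure_dom_def using form_approx_const by blast

lemma closure_dom_subspace: "lin_subspace sc (closure_dom t)"
  unfolding lin_subspace_def closure_dom_def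
  using form_approx_add form_approx_scale form_approx_const subspace_zero[OF t_subspace] by blast

lemma closure_quad_le: "form_approx t x X \<Longrightarrow> closure_quad t x \<le> limit_quad t X"
  unfolding closure_quad_def
  by (rule cInf_lower) (auto intro!: bdd_belowI[of _ 0] limit_quad_nonneg simp: form_approx_def)

lemma closure_quad_nonneg: "x \<in> closure_dom t \<Longrightarrow> 0 \<le> closure_quad t x"
  unfolding closure_quad_def closure_dom_def
  by (rule cInf_greatest) (auto intro: limit_quad_nonneg simp: form_approx_def)

lemma closure_quad_approx:
  assumes "x \<in> closure_dom t" "e > 0"
  obtains X where "form_approx t x X" "limit_quad t X < closure_quad t x + e"
proof -
  have ne: "{limit_quad t X | X. form_approx t x X} \<noteq> {}" using assms(1) unfolding closure_dom_def by blast
  have "Inf {limit_quad t X | X. form_approx t x X} < closure_quad t x + e"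
    using assms(2) unfolding closure_quad_def by simp
  from cInf_lessD[OF ne this] obtain X where "form_approx t x X" "limit_quad t X < closure_quad t x + e"
    by blast
  thus ?thesis by (rule that)
qed

lemma closure_quad_le_quad: "x \<in> fdom t \<Longrightarrow> closure_quad t x \<le> quad (fval t) x"
  using closure_quad_le[OF form_approx_const] limit_quad_const by simp

lemma closure_quad_zero: "closure_quad t 0 = 0"
proof -
  have 0: "0 \<in> fdom t" using subspace_zero[OF t_subspace] .
  hence "closure_quad t 0 \<le> quad (fval t) 0" by (rule closure_quad_le_quad)
  moreover have "quad (fval t) 0 = 0" using sesq_zero_right[OF t_sesq 0] by (simp add: quad_def)
  moreover have "0 \<le> closure_quad t 0" using closure_quad_nonneg dom_subset_closure_dom 0 by blast
  ultimately show ?thesis by simp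
qed

lemma closure_quad_scale_le:
  assumes x: "x \<in> closure_dom t" shows "closure_quad t (sc a x) \<le> (cmod a)\<^sup>2 * closure_quad t x"
proof (rule field_le_epsilon)
  fix e :: real assume e: "e > 0"
  define c where "c = (cmod a)\<^sup>2 + 1"
  have c: "c > 0" "(cmod a)\<^sup>2 / c \<le> 1" unfolding c_def by (simp_all add: add_nonneg_pos)
  obtain X where X: "form_approx t x X" "limit_quad t X < closure_quad t x + e / c"
    using closure_quad_approx[OF x divide_pos_pos[OF e c(1)]] .
  have "closure_quad t (sc a x) \<le> limit_quad t (\<lambda>n. sc a (X n))"
    using closure_quad_le form_approx_scale X(1) by blast
  also have "\<dots> = (cmod a)\<^sup>2 * limit_quad t X"
    using limit_quad_scale X(1) unfolding form_approx_def by blast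
  also have "\<dots> \<le> (cmod a)\<^sup>2 * (closure_quad t x + e / c)"
    using X(2) by (intro mult_left_mono) auto
  also have "\<dots> = (cmod a)\<^sup>2 * closure_quad t x + e * ((cmod a)\<^sup>2 / c)"
    by (simp add: distrib_left)
  also have "e * ((cmod a)\<^sup>2 / c) \<le> e" using mult_left_le[OF c(2)] e by simp
  finally show "closure_quad t (sc a x) \<le> (cmod a)\<^sup>2 * closure_quad t x + e" by simp
qed

lemma closure_quad_scale:
  assumes x: "x \<in> closure_dom t" shows "closure_quad t (sc a x) = (cmod a)\<^sup>2 * closure_quad t x"
proof (cases "a = 0")
  case True thus ?thesis using closure_quad_zero by simp
next
  case False
  have ax: "sc a x \<in> closure_dom t" using subspace_scale[OF closure_dom_subspace x] .
  have "closure_quad t x = closure_quad t (sc (1/a) (sc a x))" using False by (simp add: scale_scale)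
  also have "\<dots> \<le> (cmod (1/a))\<^sup>2 * closure_quad t (sc a x)" by (rule closure_quad_scale_le[OF ax])
  finally have "(cmod a)\<^sup>2 * closure_quad t x \<le> (cmod a)\<^sup>2 * ((cmod (1/a))\<^sup>2 * closure_quad t (sc a x))"
    by (intro mult_left_mono) auto
  also have "\<dots> = closure_quad t (sc a x)" using False by (simp add: norm_divide power_divide)
  finally show ?thesis using closure_quad_scale_le[OF x, of a] by simp
qed

lemma closure_quad_parallelogram_le:
  assumes x: "x \<in> closure_dom t" and y: "y \<in> closure_dom t"
  shows "closure_quad t (x + y) + closure_quad t (x - y) \<le> 2 * closure_quad t x + 2 * closure_quad t y"
proof (rule field_le_epsilon)
  fix e :: real assume e: "e > 0"
  have e4: "e / 4 > 0" using e by simp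
  obtain X where X: "form_approx t x X" "limit_quad t X < closure_quad t x + e / 4"
    using closure_quad_approx[OF x e4] .
  obtain Y where Y: "form_approx t y Y" "limit_quad t Y < closure_quad t y + e / 4"
    using closure_quad_approx[OF y e4] .
  have "closure_quad t (x + y) + closure_quad t (x - y)
      \<le> limit_quad t (\<lambda>n. X n + Y n) + limit_quad t (\<lambda>n. X n - Y n)"
    using closure_quad_le[OF form_approx_add[OF X(1) Y(1)]] closure_quad_le[OF form_approx_diff[OF X(1) Y(1)]]
    by simp
  also have "\<dots> = 2 * limit_quad t X + 2 * limit_quad t Y"
    using limit_quad_parallelogram X(1) Y(1) unfolding form_approx_def by blast
  finally show "closure_quad t (x + y) + closure_quad t (x - y) \<le> 2 * closure_quad t x + 2 * closure_quad t y + e"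
    using X(2) Y(2) by linarith
qed

lemma closure_quad_parallelogram:
  assumes x: "x \<in> closure_dom t" and y: "y \<in> closure_dom t"
  shows "closure_quad t (x + y) + closure_quad t (x - y) = 2 * closure_quad t x + 2 * closure_quad t y"
proof -
  have xy: "x + y \<in> closure_dom t" "x - y \<in> closure_dom t"
    using subspace_add[OF closure_dom_subspace] subspace_diff[OF closure_dom_subspace] x y by blast+
  have "closure_quad t ((x + y) + (x - y)) + closure_quad t ((x + y) - (x - y))
      \<le> 2 * closure_quad t (x + y) + 2 * closure_quad t (x - y)"
    using closure_quad_parallelogram_le[OF xy] .
  moreover have "(x + y) + (x - y) = sc 2 x" "(x + y) - (x - y) = sc 2 y" by (simp_all add: scale_two)
  moreover have "closure_quad t (sc 2 x) = 4 * closure_quad t x" "closure_quad t (sc 2 y) = 4 * closure_quad t y"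
    using closure_quad_scale x y by simp_all
  ultimately show ?thesis using closure_quad_parallelogram_le[OF x y] by simp
qed

lemma closure_quad_add_le:
  "x \<in> closure_dom t \<Longrightarrow> y \<in> closure_dom t \<Longrightarrow>
    closure_quad t (x + y) \<le> 2 * closure_quad t x + 2 * closure_quad t y"
proof -
  assume x: "x \<in> closure_dom t" and y: "y \<in> closure_dom t"
  have "0 \<le> closure_quad t (x - y)"
    using closure_quad_nonneg subspace_diff[OF closure_dom_subspace x y] .
  thus ?thesis using closure_quad_parallelogram[OF x y] by linarith
qed

lemma closure_quad_minus_commute:
  "x \<in> closure_dom t \<Longrightarrow> y \<in> closure_dom t \<Longrightarrow> closure_quad t (x - y) = closure_quad t (y - x)"
  using closure_quad_scale[of "x - y" "-1"] subspace_diff[OF closure_dom_subspace]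
  by (simp add: scale_minus_one)

lemma sqrt_quad_tail_le:
  assumes UD: "\<And>j k. U j k \<in> fdom t"
    and small: "\<And>j K. j < K \<Longrightarrow> sqrt (quad (fval t) (U j K)) < (1/2)^j"
  shows "sqrt (quad (fval t) (\<Sum>j\<in>{K..<K'}. U j K')) \<le> 2 * (1/2)^K"
proof -
  have "sqrt (quad (fval t) (\<Sum>j\<in>{K..<K'}. U j K')) \<le> (\<Sum>j\<in>{K..<K'}. sqrt (quad (fval t) (U j K')))"
    by (rule sqrt_quad_sum[OF t_sesq t_nonneg]) (auto simp: UD)
  also have "\<dots> \<le> (\<Sum>j\<in>{K..<K'}. (1/2)^j)" using small by (intro sum_mono) (auto intro: less_imp_le)
  also have "\<dots> \<le> 2 * (1/2)^K" by (rule geometric_sum_half_le)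
  finally show ?thesis .
qed

lemma form_cauchy_diagonal_sum:
  assumes UD: "\<And>j k. U j k \<in> fdom t" and VD: "\<And>k. V k \<in> fdom t"
    and small: "\<And>j K. j < K \<Longrightarrow> sqrt (quad (fval t) (U j K)) < (1/2)^j"
    and V_cauchy: "\<And>K K'. K \<le> K' \<Longrightarrow> sqrt (quad (fval t) (V K' - V K)) < (1/2)^K"
    and U_cauchy: "\<And>j K K'. j < K \<Longrightarrow> K \<le> K' \<Longrightarrow>
      sqrt (quad (fval t) (U j K' - U j K)) < (1/2)^K / (real K + 1)"
  shows "form_cauchy t (\<lambda>K. V K + (\<Sum>j<K. U j K))"
proof -
  let ?q = "\<lambda>x. sqrt (quad (fval t) x)"
  define w where "w K = V K + (\<Sum>j<K. U j K)" for K
  have sesq: "sesquilinear_on (fdom t) (fval t)" and nonneg: "\<forall>x\<in>fdom t. 0 \<le> Re (fval t x x)"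
    using t_sesq t_nonneg .
  have D: "lin_subspace sc (fdom t)" using t_subspace .
  have wD: "w K \<in> fdom t" for K
  proof -
    have "(\<Sum>j<K. U j K) \<in> fdom t" by (rule subspace_sum[OF D]) (rule UD)
    thus ?thesis unfolding w_def by (rule subspace_add[OF D VD])
  qed
  have bound: "?q (w K' - w K) \<le> 4 * (1/2)^K" if KK: "K \<le> K'" for K K'
  proof -
    let ?A = "V K' - V K" and ?B = "\<Sum>j<K. U j K' - U j K" and ?C = "\<Sum>j\<in>{K..<K'}. U j K'"
    have "(\<Sum>j<K'. U j K') = (\<Sum>j<K. U j K') + ?C"
      using sum.atLeastLessThan_concat[of 0 K K' "\<lambda>j. U j K'"] KK by (simp add: atLeast0LessThan)
    hence eq: "w K' - w K = ?A + ?B + ?C" unfolding w_def by (simp add: sum_subtractf algebra_simps)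
    have AD: "?A \<in> fdom t" using subspace_diff[OF D VD VD] .
    have BD: "?B \<in> fdom t" by (rule subspace_sum[OF D]) (rule subspace_diff[OF D UD UD])
    have CD: "?C \<in> fdom t" by (rule subspace_sum[OF D]) (rule UD)
    have "?q (?A + ?B + ?C) \<le> ?q ?A + ?q ?B + ?q ?C"
      using sqrt_quad_triangle[OF sesq nonneg subspace_add[OF D AD BD] CD]
        sqrt_quad_triangle[OF sesq nonneg AD BD] by linarith
    also have "?q ?A < (1/2)^K" using V_cauchy[OF KK] .
    also have "?q ?B \<le> (1/2)^K"
    proof -
      have "?q ?B \<le> (\<Sum>j<K. ?q (U j K' - U j K))"
        by (rule sqrt_quad_sum[OF sesq nonneg]) (auto intro: subspace_diff[OF D] UD)
      also have "\<dots> \<le> (\<Sum>j<K. (1/2)^K / (real K + 1))"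
        using U_cauchy KK by (intro sum_mono) (auto intro: less_imp_le)
      also have "\<dots> = (1/2)^K * (real K / (real K + 1))" by simp
      also have "\<dots> \<le> (1/2)^K" by (intro mult_left_le) simp_all
      finally show ?thesis .
    qed
    also have "?q ?C \<le> 2 * (1/2)^K" by (rule sqrt_quad_tail_le[OF UD small])
    finally show ?thesis unfolding eq by simp
  qed
  show ?thesis
    unfolding form_cauchy_def w_def[symmetric]
  proof (intro conjI allI impI)
    show "w k \<in> fdom t" for k by (rule wD)
    fix e :: real assume e: "e > 0"
    obtain K0 where K0: "(1/2::real)^K0 < e / 4" using real_arch_pow_inv[of "e/4" "1/2"] e by auto
    show "\<exists>N. \<forall>m\<ge>N. \<forall>k\<ge>N. ?q (w m - w k) < e"
    proof (intro exI allI impI)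
      fix m k assume "K0 \<le> m" "K0 \<le> k"
      hence "(1/2::real)^min m k \<le> (1/2)^K0" by (intro power_decreasing) auto
      moreover have "?q (w m - w k) \<le> 4 * (1/2)^min m k"
      proof (cases "k \<le> m")
        case True thus ?thesis using bound[OF True] by (simp add: min_absorb2)
      next
        case False
        hence "?q (w k - w m) \<le> 4 * (1/2)^m" using bound[of m k] by simp
        thus ?thesis using False quad_diff_commute[OF sesq nonneg wD wD, of m k] by (simp add: min_absorb1)
      qed
      ultimately show "?q (w m - w k) < e" using K0 by linarith
    qed
  qed
qed

text \<open>Pick indices \<open>n K\<close> far enough out that \<open>V\<close> and the first \<open>K\<close> sequences \<open>U j\<close> have
  settled to within \<open>c K = (1/2)^K / (K + 1)\<close>, both for \<open>t\<close> and in \<open>H\<close>.\<close>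
lemma closure_dom_diagonal_approximants:
  assumes d: "\<And>j. d j \<in> closure_dom t" and small: "\<And>j. closure_quad t (d j) < (1/4)^j"
    and x0: "x0 \<in> closure_dom t"
  obtains U V n where "\<And>j. form_approx t (d j) (U j)" "form_approx t x0 V" "strict_mono n"
    "\<And>j K. j < K \<Longrightarrow> sqrt (quad (fval t) (U j (n K))) < (1/2)^j"
    "\<And>K K'. K \<le> K' \<Longrightarrow> sqrt (quad (fval t) (V (n K') - V (n K))) < (1/2)^K"
    "\<And>j K K'. j < K \<Longrightarrow> K \<le> K' \<Longrightarrow>
      sqrt (quad (fval t) (U j (n K') - U j (n K))) < (1/2)^K / (real K + 1)"
    "\<And>K. vnorm (V (n K) - x0) < (1/2)^K / (real K + 1)"
    "\<And>j K. j < K \<Longrightarrow> vnorm (U j (n K) - d j) < (1/2)^K / (real K + 1)"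
proof -
  let ?Q = "quad (fval t)"
  have "\<exists>U. form_approx t (d j) U \<and> limit_quad t U < (1/4)^j" for j
  proof -
    have gap: "(1/4::real)^j - closure_quad t (d j) > 0" using small[of j] by simp
    obtain X where "form_approx t (d j) X"
      "limit_quad t X < closure_quad t (d j) + ((1/4)^j - closure_quad t (d j))"
      by (rule closure_quad_approx[OF d gap])
    thus ?thesis by auto
  qed
  then obtain U where U: "\<And>j. form_approx t (d j) (U j)" and U_lim: "\<And>j. limit_quad t (U j) < (1/4)^j"
    by metis
  obtain V where V: "form_approx t x0 V" using x0 unfolding closure_dom_def by blast
  have U_cauchy: "\<And>j. form_cauchy t (U j)" and U_conv: "\<And>j. hconverges (U j) (d j)"
    and V_cauchy: "form_cauchy t V" and V_conv: "hconverges V x0"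
    using U V unfolding form_approx_def by auto
  define c where "c K = (1/2::real)^K / (real K + 1)" for K
  have c_pos: "c K > 0" for K unfolding c_def by simp
  define P where "P K m \<longleftrightarrow>
     (\<forall>j\<in>{..<K}. \<forall>a\<ge>m. ?Q (U j a) < (1/4)^j) \<and>
     (\<forall>j\<in>{..<K}. \<forall>a\<ge>m. \<forall>b\<ge>m. sqrt (?Q (U j a - U j b)) < c K) \<and>
     (\<forall>a\<ge>m. \<forall>b\<ge>m. sqrt (?Q (V a - V b)) < (1/2)^K) \<and>
     vnorm (V m - x0) < c K \<and> (\<forall>j\<in>{..<K}. vnorm (U j m - d j) < c K)" for K m
  have evP: "eventually (P K) sequentially" for K
  proof -
    have "eventually (\<lambda>m. \<forall>a\<ge>m. ?Q (U j a) < (1/4)^j) sequentially" for j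
      using order_tendstoD(2)[OF limit_quad_tendsto[OF U_cauchy] U_lim]
      unfolding eventually_sequentially by (meson order_trans)
    moreover have "eventually (\<lambda>m. \<forall>a\<ge>m. \<forall>b\<ge>m. sqrt (?Q (U j a - U j b)) < c K) sequentially" for j
      using form_cauchy_eventually[OF U_cauchy c_pos] .
    moreover have "eventually (\<lambda>m. \<forall>a\<ge>m. \<forall>b\<ge>m. sqrt (?Q (V a - V b)) < (1/2)^K) sequentially"
      by (rule form_cauchy_eventually[OF V_cauchy]) simp
    moreover have "eventually (\<lambda>m. vnorm (V m - x0) < c K) sequentially"
      using order_tendstoD(2)[OF V_conv[unfolded hconverges_def] c_pos] .
    moreover have "eventually (\<lambda>m. vnorm (U j m - d j) < c K) sequentially" for j
      using order_tendstoD(2)[OF U_conv[unfolded hconverges_def] c_pos] .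
    ultimately show ?thesis
      unfolding P_def by (intro eventually_conj eventually_ball_finite ballI) auto
  qed
  obtain n where n: "strict_mono n" and Pn: "\<And>K. P K (n K)" using eventually_diagonal[of P] evP by blast
  have n_mono: "K \<le> K' \<Longrightarrow> n K \<le> n K'" for K K' using n strict_mono_less_eq by blast
  show ?thesis
  proof (rule that[OF U V n])
    show "sqrt (?Q (U j (n K))) < (1/2)^j" if "j < K" for j K
    proof -
      have "?Q (U j (n K)) < (1/4)^j" using Pn[of K] that unfolding P_def by blast
      hence "sqrt (?Q (U j (n K))) < sqrt ((1/4)^j)" by (rule real_sqrt_less_mono)
      thus ?thesis by (simp only: sqrt_quarter_power)
    qed
    show "sqrt (?Q (V (n K') - V (n K))) < (1/2)^K" if "K \<le> K'" for K K'
      using Pn[of K] n_mono[OF that] unfolding P_def by blast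
    show "sqrt (?Q (U j (n K') - U j (n K))) < (1/2)^K / (real K + 1)" if "j < K" "K \<le> K'" for j K K'
      using Pn[of K] n_mono[OF that(2)] that(1) unfolding P_def c_def by blast
    show "vnorm (V (n K) - x0) < (1/2)^K / (real K + 1)" for K
      using Pn[of K] unfolding P_def c_def by blast
    show "vnorm (U j (n K) - d j) < (1/2)^K / (real K + 1)" if "j < K" for j K
      using Pn[of K] that unfolding P_def c_def by blast
  qed
qed

lemma closure_quad_diff_le:
  assumes X: "form_approx t x X" and Y: "form_approx t y Y"
    and bound: "\<And>K. J \<le> K \<Longrightarrow> sqrt (quad (fval t) (X K - Y K)) \<le> b"
  shows "closure_quad t (x - y) \<le> b\<^sup>2"
proof -
  have approx: "form_approx t (x - y) (\<lambda>K. X K - Y K)" by (rule form_approx_diff[OF X Y])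
  have "limit_quad t (\<lambda>K. X K - Y K) \<le> b\<^sup>2"
  proof (rule limit_quad_le[of _ J])
    show cauchy: "form_cauchy t (\<lambda>K. X K - Y K)" using approx unfolding form_approx_def by blast
    show "\<forall>K\<ge>J. quad (fval t) (X K - Y K) \<le> b\<^sup>2"
    proof (intro allI impI)
      fix K assume "J \<le> K"
      have "X K - Y K \<in> fdom t" using form_cauchy_in[OF cauchy, of K] by simp
      hence q0: "0 \<le> quad (fval t) (X K - Y K)" by (rule t_quad_nonneg)
      hence "quad (fval t) (X K - Y K) = (sqrt (quad (fval t) (X K - Y K)))\<^sup>2" by simp
      also have "\<dots> \<le> b\<^sup>2" using bound[OF \<open>J \<le> K\<close>] q0 by (intro power_mono) simp_all
      finally show "quad (fval t) (X K - Y K) \<le> b\<^sup>2" .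
    qed
  qed
  thus ?thesis using closure_quad_le[OF approx] by linarith
qed

text \<open>A sequence whose increments have geometrically small closure quadratic form: approximate each
  increment by a \<open>t\<close>-Cauchy sequence and sum the approximants along a diagonal.\<close>
lemma closure_dom_telescoping:
  assumes eta: "\<And>j. \<eta> j \<in> closure_dom t"
    and small: "\<And>j. closure_quad t (\<eta> (Suc j) - \<eta> j) < (1/4)^j"
    and conv: "hconverges \<eta> x"
  shows "x \<in> closure_dom t" and "closure_quad t (x - \<eta> J) \<le> 4 * (1/4)^J"
proof -
  define d where "d j = \<eta> (Suc j) - \<eta> j" for j
  have \<eta>_sum: "\<eta> K = \<eta> 0 + (\<Sum>j<K. d j)" for K
    by (induction K) (simp_all add: d_def algebra_simps)
  have d_in: "d j \<in> closure_dom t" for j unfolding d_def using subspace_diff[OF closure_dom_subspace eta eta] .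
  have d_small: "closure_quad t (d j) < (1/4)^j" for j unfolding d_def using small .
  obtain U V n where U: "\<And>j. form_approx t (d j) (U j)" and V: "form_approx t (\<eta> 0) V"
    and n: "strict_mono n"
    and U_small: "\<And>j K. j < K \<Longrightarrow> sqrt (quad (fval t) (U j (n K))) < (1/2)^j"
    and V_settled: "\<And>K K'. K \<le> K' \<Longrightarrow> sqrt (quad (fval t) (V (n K') - V (n K))) < (1/2)^K"
    and U_settled: "\<And>j K K'. j < K \<Longrightarrow> K \<le> K' \<Longrightarrow>
      sqrt (quad (fval t) (U j (n K') - U j (n K))) < (1/2)^K / (real K + 1)"
    and V_close: "\<And>K. vnorm (V (n K) - \<eta> 0) < (1/2)^K / (real K + 1)"
    and U_close: "\<And>j K. j < K \<Longrightarrow> vnorm (U j (n K) - d j) < (1/2)^K / (real K + 1)"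
    using closure_dom_diagonal_approximants[OF d_in d_small eta[of 0]] by blast
  have U_cauchy: "\<And>j. form_cauchy t (U j)" and U_conv: "\<And>j. hconverges (U j) (d j)"
    and V_cauchy: "form_cauchy t V" and V_conv: "hconverges V (\<eta> 0)"
    using U V unfolding form_approx_def by auto
  have UD: "\<And>j K. U j (n K) \<in> fdom t" and VD: "\<And>K. V (n K) \<in> fdom t"
    using U_cauchy V_cauchy form_cauchy_in by blast+
  define w where "w K = V (n K) + (\<Sum>j<K. U j (n K))" for K
  have w_cauchy: "form_cauchy t w"
    unfolding w_def by (rule form_cauchy_diagonal_sum[OF UD VD U_small V_settled U_settled])
  have w_close: "vnorm (w K - \<eta> K) \<le> (1/2)^K" for K
  proof -
    define c where "c = (1/2::real)^K / (real K + 1)"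
    have "w K - \<eta> K = (V (n K) - \<eta> 0) + (\<Sum>j<K. U j (n K) - d j)"
      unfolding w_def \<eta>_sum[of K] by (simp add: sum_subtractf algebra_simps)
    hence "vnorm (w K - \<eta> K) \<le> vnorm (V (n K) - \<eta> 0) + vnorm (\<Sum>j<K. U j (n K) - d j)"
      by (simp only: vnorm_triangle)
    also have "vnorm (\<Sum>j<K. U j (n K) - d j) \<le> (\<Sum>j<K. vnorm (U j (n K) - d j))"
      by (rule vnorm_sum) simp
    also have "\<dots> \<le> (\<Sum>j<K. c)"
      using U_close unfolding c_def by (intro sum_mono) (auto intro: less_imp_le)
    also have "vnorm (V (n K) - \<eta> 0) \<le> c" using V_close less_imp_le unfolding c_def by blast
    finally have "vnorm (w K - \<eta> K) \<le> (real K + 1) * c" by (simp add: algebra_simps)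
    thus ?thesis unfolding c_def by simp
  qed
  have w_conv: "hconverges w x"
    unfolding hconverges_def
  proof (rule tendsto_null_sandwich[where f="\<lambda>K. (1/2)^K + vnorm (\<eta> K - x)"])
    have "(\<lambda>K. (1/2::real)^K) \<longlonglongrightarrow> 0" by (rule LIMSEQ_power_zero) simp
    thus "(\<lambda>K. (1/2::real)^K + vnorm (\<eta> K - x)) \<longlonglongrightarrow> 0"
      using tendsto_add[OF _ conv[unfolded hconverges_def]] by simp
    show "0 \<le> vnorm (w K - x)" for K by (rule vnorm_nonneg)
    show "vnorm (w K - x) \<le> (1/2)^K + vnorm (\<eta> K - x)" for K
      using vnorm_triangle_diff[where x="w K" and y="\<eta> K" and z=x] w_close[of K] by linarith
  qed
  have w_approx: "form_approx t x w" unfolding form_approx_def using w_cauchy w_conv by blast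
  thus "x \<in> closure_dom t" unfolding closure_dom_def by blast
  text \<open>The first \<open>J\<close> summands of \<open>w\<close> approximate \<open>\<eta> J\<close>; the remaining ones are uniformly
    \<open>t\<close>-small.\<close>
  define Y where "Y K = V (n K) + (\<Sum>j<J. U j (n K))" for K
  have incr: "\<And>K. K \<le> n K" using n strict_mono_imp_increasing by blast
  have "form_cauchy t Y"
  proof -
    have "form_cauchy t (\<lambda>K. \<Sum>j<J. U j (n K))"
      by (intro form_cauchy_sum form_cauchy_reindex[OF U_cauchy incr])
    thus ?thesis unfolding Y_def by (rule form_cauchy_add[OF form_cauchy_reindex[OF V_cauchy incr]])
  qed
  moreover have "hconverges Y (\<eta> J)"
  proof -
    have "hconverges (\<lambda>K. \<Sum>j<J. U j (n K)) (\<Sum>j<J. d j)"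
      by (intro hconverges_sum hconverges_subseq[OF U_conv n])
    thus ?thesis unfolding Y_def \<eta>_sum[of J] by (rule hconverges_add[OF hconverges_subseq[OF V_conv n]])
  qed
  ultimately have Y_approx: "form_approx t (\<eta> J) Y" unfolding form_approx_def by blast
  have "sqrt (quad (fval t) (w K - Y K)) \<le> 2 * (1/2)^J" if "J \<le> K" for K
  proof -
    have "(\<Sum>j<K. U j (n K)) = (\<Sum>j<J. U j (n K)) + (\<Sum>j\<in>{J..<K}. U j (n K))"
      using sum.atLeastLessThan_concat[of 0 J K "\<lambda>j. U j (n K)"] that by (simp add: atLeast0LessThan)
    hence "w K - Y K = (\<Sum>j\<in>{J..<K}. U j (n K))" unfolding w_def Y_def by simp
    thus ?thesis using sqrt_quad_tail_le[where U="\<lambda>j K. U j (n K)", OF UD U_small] by simp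
  qed
  hence "closure_quad t (x - \<eta> J) \<le> (2 * (1/2)^J)\<^sup>2" by (rule closure_quad_diff_le[OF w_approx Y_approx])
  also have "(2 * (1/2::real)^J)\<^sup>2 = 4 * (1/4)^J"
  proof -
    have "((1/2::real)^J)\<^sup>2 = ((1/2) * (1/2))^J" unfolding power2_eq_square power_mult_distrib ..
    thus ?thesis by (simp add: power_mult_distrib)
  qed
  finally show "closure_quad t (x - \<eta> J) \<le> 4 * (1/4)^J" .
qed

lemma closure_quad_complete:
  assumes \<xi>: "\<And>k. \<xi> k \<in> closure_dom t"
    and cauchy: "\<And>e. e > 0 \<Longrightarrow> \<exists>N. \<forall>m\<ge>N. \<forall>k\<ge>N. closure_quad t (\<xi> m - \<xi> k) < e"
    and conv: "hconverges \<xi> x"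
  shows "x \<in> closure_dom t" and "(\<lambda>k. closure_quad t (\<xi> k - x)) \<longlonglongrightarrow> 0"
proof -
  have sub: "lin_subspace sc (closure_dom t)" using closure_dom_subspace .
  have ev: "eventually (\<lambda>m. \<forall>a\<ge>m. \<forall>b\<ge>m. closure_quad t (\<xi> a - \<xi> b) < (1/4)^j) sequentially" for j
  proof -
    obtain M where "\<forall>a\<ge>M. \<forall>b\<ge>M. closure_quad t (\<xi> a - \<xi> b) < (1/4)^j"
      using cauchy[of "(1/4)^j"] by auto
    thus ?thesis unfolding eventually_sequentially by (meson order_trans)
  qed
  obtain N where N: "strict_mono N"
    and N_cauchy: "\<And>j. \<forall>a\<ge>N j. \<forall>b\<ge>N j. closure_quad t (\<xi> a - \<xi> b) < (1/4)^j"
    using eventually_diagonal[of "\<lambda>j m. \<forall>a\<ge>m. \<forall>b\<ge>m. closure_quad t (\<xi> a - \<xi> b) < (1/4)^j"] ev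
    by blast
  define \<eta> where "\<eta> j = \<xi> (N j)" for j
  have "closure_quad t (\<eta> (Suc j) - \<eta> j) < (1/4)^j" for j
    unfolding \<eta>_def using N_cauchy N strict_mono_less_eq by (meson le_SucI order_refl)
  moreover have "hconverges \<eta> x" unfolding \<eta>_def using hconverges_subseq[OF conv N] .
  ultimately have x: "x \<in> closure_dom t" and tail: "\<And>J. closure_quad t (x - \<eta> J) \<le> 4 * (1/4)^J"
    using closure_dom_telescoping[of \<eta>] \<xi> unfolding \<eta>_def by blast+
  show "x \<in> closure_dom t" using x .
  show "(\<lambda>k. closure_quad t (\<xi> k - x)) \<longlonglongrightarrow> 0"
    unfolding LIMSEQ_iff
  proof (intro allI impI)
    fix r :: real assume r: "r > 0"
    obtain J where J: "(1/4::real)^J < r / 10" using real_arch_pow_inv[of "r/10" "1/4"] r by auto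
    show "\<exists>no. \<forall>k\<ge>no. norm (closure_quad t (\<xi> k - x) - 0) < r"
    proof (intro exI allI impI)
      fix k assume k: "N J \<le> k"
      have a: "\<xi> k - \<eta> J \<in> closure_dom t" "\<eta> J - x \<in> closure_dom t"
        unfolding \<eta>_def using subspace_diff[OF sub] \<xi> x by blast+
      have "closure_quad t (\<xi> k - x) = closure_quad t ((\<xi> k - \<eta> J) + (\<eta> J - x))" by simp
      also have "\<dots> \<le> 2 * closure_quad t (\<xi> k - \<eta> J) + 2 * closure_quad t (\<eta> J - x)"
        using closure_quad_add_le[OF a] .
      also have "closure_quad t (\<xi> k - \<eta> J) < (1/4)^J" unfolding \<eta>_def using N_cauchy k by simp
      also have "closure_quad t (\<eta> J - x) = closure_quad t (x - \<eta> J)"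
        using closure_quad_minus_commute \<xi> x unfolding \<eta>_def by blast
      also have "\<dots> \<le> 4 * (1/4)^J" by (rule tail)
      finally have "closure_quad t (\<xi> k - x) < 10 * (1/4)^J" by simp
      moreover have "0 \<le> closure_quad t (\<xi> k - x)"
        using closure_quad_nonneg subspace_diff[OF sub] \<xi> x by blast
      ultimately show "norm (closure_quad t (\<xi> k - x) - 0) < r" using J by simp
    qed
  qed
qed

end

lemma form_eq_if_diag_eq:
  assumes a: "is_form sc ip a" and b: "is_form sc ip b" and d: "fdom a = fdom b"
    and diag: "\<And>x. x \<in> fdom a \<Longrightarrow> fval a x x = fval b x x"
  shows "a = b"
proof -
  have Sa: "sesquilinear_on (fdom a) (fval a)" using form_sesquilinear[OF a] .
  have Sb: "sesquilinear_on (fdom a) (fval b)" using form_sesquilinear[OF b] d by simp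
  have "fval a x y = fval b x y" for x y
  proof (cases "x \<in> fdom a \<and> y \<in> fdom a")
    case True thus ?thesis using sesq_eq_if_diag_eq[OF Sa Sb diag] by blast
  next
    case False thus ?thesis using a b d unfolding is_form_def by auto
  qed
  hence "fval a = fval b" by blast
  thus ?thesis using d unfolding fdom_def fval_def by (simp add: prod_eq_iff)
qed

lemma positive_form_eqI:
  assumes aF: "is_form sc ip a" and bF: "is_form sc ip b" and aP: "positive_form a" and bP: "positive_form b"
    and d: "fdom a = fdom b" and re: "\<And>x. x \<in> fdom a \<Longrightarrow> Re (fval a x x) = Re (fval b x x)"
  shows "a = b"
proof (rule form_eq_if_diag_eq[OF aF bF d])
  fix x assume x: "x \<in> fdom a"
  have "Im (fval a x x) = 0" using aP x unfolding positive_form_def by blast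
  moreover have "Im (fval b x x) = 0" using bP x d unfolding positive_form_def by blast
  ultimately show "fval a x x = fval b x x" using re[OF x] by (simp add: complex_eq_iff)
qed

definition make_form :: "'a set \<Rightarrow> ('a \<Rightarrow> 'a \<Rightarrow> complex) \<Rightarrow> 'a form" where
  "make_form S f = (S, \<lambda>x y. if x \<in> S \<and> y \<in> S then f x y else 0)"

lemma fdom_make_form[simp]: "fdom (make_form S f) = S" unfolding make_form_def fdom_def by simp

lemma fval_make_form: "fval (make_form S f) x y = (if x \<in> S \<and> y \<in> S then f x y else 0)"
  unfolding make_form_def fval_def by simp

lemma is_form_make_form:
  assumes S: "sesquilinear_on S f" and d: "dense_in ip S"
  shows "is_form sc ip (make_form S f)"
  unfolding is_form_def fdom_make_form fval_make_form
  using S d sesq_subspace[OF S] subspace_add[OF sesq_subspace[OF S]] subspace_scale[OF sesq_subspace[OF S]]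
  unfolding sesquilinear_on_def by auto

lemma dense_in_mono: "dense_in ip S \<Longrightarrow> S \<subseteq> S' \<Longrightarrow> dense_in ip S'"
  unfolding dense_in_def by blast

lemma dense_in_UNIV: "dense_in ip UNIV"
  unfolding dense_in_def by (metis diff_self vnorm_zero UNIV_I)

lemma form_add_make_form: "form_add a b = make_form (fdom a \<inter> fdom b) (\<lambda>x y. fval a x y + fval b x y)"
  unfolding form_add_def make_form_def by simp

lemma fdom_form_add[simp]: "fdom (form_add a b) = fdom a \<inter> fdom b" unfolding form_add_def fdom_def by simp

lemma fval_form_add:
  "fval (form_add a b) x y =
    (if x \<in> fdom a \<inter> fdom b \<and> y \<in> fdom a \<inter> fdom b then fval a x y + fval b x y else 0)"
  unfolding form_add_def fval_def fdom_def by auto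

lemma quad_form_add:
  "z \<in> fdom a \<Longrightarrow> z \<in> fdom b \<Longrightarrow> quad (fval (form_add a b)) z = quad (fval a) z + quad (fval b) z"
  unfolding quad_def fval_form_add by simp

lemma is_form_form_add:
  assumes a: "is_form sc ip a" and b: "is_form sc ip b" and d: "dense_in ip (fdom a \<inter> fdom b)"
  shows "is_form sc ip (form_add a b)"
proof -
  have L: "lin_subspace sc (fdom a \<inter> fdom b)" using subspace_Int form_subspace a b by blast
  have "sesquilinear_on (fdom a \<inter> fdom b) (\<lambda>x y. fval a x y + fval b x y)"
    using sesquilinear_on_add sesquilinear_on_subset[OF form_sesquilinear[OF a] L] sesquilinear_on_subset[OF form_sesquilinear[OF b] L] by blast
  thus ?thesis unfolding form_add_make_form by (rule is_form_make_form[OF _ d])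
qed

lemma positive_form_add: "positive_form a \<Longrightarrow> positive_form b \<Longrightarrow> positive_form (form_add a b)"
  unfolding positive_form_def fval_form_add by auto

lemma form_add_commute: "form_add a b = form_add b a"
  unfolding form_add_def by (auto simp: add.commute fun_eq_iff)

lemma form_add_assoc: "form_add (form_add a b) c = form_add a (form_add b c)"
  unfolding form_add_def fdom_def fval_def by (auto simp: add.assoc fun_eq_iff)

lemma is_form_zero: "is_form sc ip zero_form"
  using dense_in_UNIV unfolding is_form_def zero_form_def fdom_def fval_def lin_subspace_def
  by auto

lemma positive_form_zero: "positive_form zero_form"
  unfolding positive_form_def zero_form_def fval_def by simp

lemma bounded_form_zero: "bounded_form ip zero_form"
  unfolding bounded_form_def zero_form_def fval_def by (auto intro: bdd_aboveI[of _ 0])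

lemma fdom_zero_form [simp]: "fdom zero_form = UNIV"
  unfolding zero_form_def fdom_def by simp

lemma fval_zero_form [simp]: "fval zero_form x y = 0"
  unfolding zero_form_def fval_def by simp

lemma form_add_zero: "is_form sc ip a \<Longrightarrow> form_add a zero_form = a"
  unfolding form_add_def fdom_def fval_def zero_form_def is_form_def
  by (cases a) (auto simp: fun_eq_iff)

lemma Vf_is_form: "t \<in> Vf sc ip \<Longrightarrow> is_form sc ip t" unfolding Vf_def by blast

lemma Vf_positive: "t \<in> Vf sc ip \<Longrightarrow> positive_form t" unfolding Vf_def by blast

lemma Vf_bounded_dom: "t \<in> Vf sc ip \<Longrightarrow> bounded_form ip t \<Longrightarrow> fdom t = UNIV"
  unfolding Vf_def by blast

lemma zero_form_Vf: "zero_form \<in> Vf sc ip" unfolding Vf_def using is_form_zero positive_form_zero by simp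

lemma bounded_form_quad_le:
  assumes F: "is_form sc ip t" and P: "positive_form t" and U: "fdom t = UNIV"
    and B: "bounded_form ip t"
  shows "\<exists>M\<ge>0. \<forall>x. quad (fval t) x \<le> M * (vnorm x)^2"
proof -
  obtain M where M: "\<And>v. v \<in> {Re (fval t x x) | x. x \<in> fdom t \<and> vnorm x = 1} \<Longrightarrow> v \<le> M"
    using B unfolding bounded_form_def bdd_above_def by blast
  have "quad (fval t) x \<le> max M 0 * (vnorm x)^2" for x
  proof (cases "x = 0")
    case True
    have "quad (fval t) 0 = 0" using sesq_zero_right[OF form_sesquilinear[OF F]] U by (simp add: quad_def)
    thus ?thesis using True by simp
  next
    case False
    hence np: "vnorm x > 0" using vnorm_eq_zero vnorm_nonneg[of x] by (metis less_eq_real_def)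
    let ?u = "sc (complex_of_real (1 / vnorm x)) x"
    have nu: "vnorm ?u = 1" using np by (simp add: vnorm_scale norm_divide)
    have "Re (fval t ?u ?u) \<le> M" using M nu U by blast
    hence qu: "quad (fval t) ?u \<le> max M 0" unfolding quad_def by simp
    have "x = sc (complex_of_real (vnorm x)) ?u" using np by (simp add: scale_scale)
    hence "quad (fval t) x = (cmod (complex_of_real (vnorm x)))^2 * quad (fval t) ?u"
      using quad_scale[OF form_sesquilinear[OF F] positive_form_nonneg[OF P]] U by (metis UNIV_I)
    also have "\<dots> = (vnorm x)^2 * quad (fval t) ?u" using vnorm_nonneg[of x] by simp
    also have "\<dots> \<le> (vnorm x)^2 * max M 0" using qu by (intro mult_left_mono) auto
    finally show ?thesis by (simp add: mult.commute)
  qed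
  thus ?thesis by (intro exI[of _ "max M 0"]) auto
qed

lemma bounded_form_mono:
  assumes B: "bounded_form ip b" and sub: "fdom a \<subseteq> fdom b"
    and le: "\<And>x. x \<in> fdom a \<Longrightarrow> Re (fval a x x) \<le> Re (fval b x x)"
  shows "bounded_form ip a"
proof -
  obtain M where M: "\<And>v. v \<in> {Re (fval b x x) | x. x \<in> fdom b \<and> vnorm x = 1} \<Longrightarrow> v \<le> M"
    using B unfolding bounded_form_def bdd_above_def by blast
  show ?thesis unfolding bounded_form_def bdd_above_def
  proof (intro exI ballI)
    fix v assume "v \<in> {Re (fval a x x) | x. x \<in> fdom a \<and> vnorm x = 1}"
    then obtain x where x: "x \<in> fdom a" "vnorm x = 1" "v = Re (fval a x x)" by blast
    have "Re (fval b x x) \<le> M" using M x sub by blast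
    thus "v \<le> M" using le[OF x(1)] x(3) by linarith
  qed
qed

lemma bounded_form_add:
  assumes A: "bounded_form ip a" and B: "bounded_form ip b"
  shows "bounded_form ip (form_add a b)"
proof -
  obtain Ma where Ma: "\<And>v. v \<in> {Re (fval a x x) | x. x \<in> fdom a \<and> vnorm x = 1} \<Longrightarrow> v \<le> Ma"
    using A unfolding bounded_form_def bdd_above_def by blast
  obtain Mb where Mb: "\<And>v. v \<in> {Re (fval b x x) | x. x \<in> fdom b \<and> vnorm x = 1} \<Longrightarrow> v \<le> Mb"
    using B unfolding bounded_form_def bdd_above_def by blast
  show ?thesis unfolding bounded_form_def bdd_above_def
  proof (intro exI ballI)
    fix v assume "v \<in> {Re (fval (form_add a b) x x) | x. x \<in> fdom (form_add a b) \<and> vnorm x = 1}"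
    then obtain x where x: "x \<in> fdom a" "x \<in> fdom b" "vnorm x = 1" "v = Re (fval (form_add a b) x x)" by auto
    have "Re (fval a x x) \<le> Ma" "Re (fval b x x) \<le> Mb" using Ma Mb x by blast+
    thus "v \<le> Ma + Mb" using x by (simp add: fval_form_add)
  qed
qed

lemma bounded_form_quad_tendsto:
  assumes F: "is_form sc ip t" and P: "positive_form t" and U: "fdom t = UNIV"
    and B: "bounded_form ip t" and c: "hconverges s z"
  shows "(\<lambda>n. quad (fval t) (s n)) \<longlonglongrightarrow> quad (fval t) z"
proof -
  obtain M where M: "M \<ge> 0" "\<And>x. quad (fval t) x \<le> M * (vnorm x)^2" using bounded_form_quad_le[OF F P U B] by blast
  have S: "sesquilinear_on UNIV (fval t)" using form_sesquilinear[OF F] U by simp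
  have Pp: "\<forall>x\<in>UNIV. 0 \<le> Re (fval t x x)" using positive_form_nonneg[OF P] U by simp
  have "(\<lambda>n. sqrt (quad (fval t) (s n)) - sqrt (quad (fval t) z)) \<longlonglongrightarrow> 0"
  proof (rule tendsto_rabs_zero_cancel, rule tendsto_null_sandwich)
    show "(\<lambda>n. sqrt M * vnorm (s n - z)) \<longlonglongrightarrow> 0"
      using tendsto_mult[OF tendsto_const c[unfolded hconverges_def], of "sqrt M"] by simp
    fix n
    have "\<bar>sqrt (quad (fval t) (s n)) - sqrt (quad (fval t) z)\<bar> \<le> sqrt (quad (fval t) (s n - z))"
      by (rule sqrt_quad_reverse_triangle[OF S Pp]) auto
    also have "\<dots> \<le> sqrt (M * (vnorm (s n - z))^2)" using M(2) by simp
    also have "\<dots> = sqrt M * vnorm (s n - z)" using vnorm_nonneg by (simp add: real_sqrt_mult)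
    finally show "\<bar>sqrt (quad (fval t) (s n)) - sqrt (quad (fval t) z)\<bar> \<le> sqrt M * vnorm (s n - z)" .
  qed auto
  hence "(\<lambda>n. sqrt (quad (fval t) (s n))) \<longlonglongrightarrow> sqrt (quad (fval t) z)" by (simp add: LIM_zero_cancel)
  hence "(\<lambda>n. (sqrt (quad (fval t) (s n)))^2) \<longlonglongrightarrow> (sqrt (quad (fval t) z))^2" by (rule tendsto_power)
  thus ?thesis using form_quad_nonneg[OF F P] U by simp
qed

lemma bounded_forms_eq_if_dense_eq:
  assumes y: "y \<in> Vf sc ip" and u: "u \<in> Vf sc ip"
    and bY: "bounded_form ip y" and bu: "bounded_form ip u" and d: "dense_in ip S"
    and eq: "\<And>z. z \<in> S \<Longrightarrow> Re (fval y z z) = Re (fval u z z)"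
  shows "y = u"
proof (rule positive_form_eqI[OF Vf_is_form[OF y] Vf_is_form[OF u] Vf_positive[OF y] Vf_positive[OF u]])
  have Uy: "fdom y = UNIV" and Uu: "fdom u = UNIV" using Vf_bounded_dom[OF y bY] Vf_bounded_dom[OF u bu] by auto
  show "fdom y = fdom u" using Uy Uu by simp
  fix z
  have "\<forall>n. \<exists>v\<in>S. vnorm (z - v) < inverse (real (Suc n))" using d unfolding dense_in_def by simp
  then obtain s where s: "\<And>n. s n \<in> S" "\<And>n. vnorm (z - s n) < inverse (real (Suc n))" by metis
  have c: "hconverges s z" unfolding hconverges_def
  proof (rule tendsto_null_sandwich[OF LIMSEQ_inverse_real_of_nat])
    show "0 \<le> vnorm (s n - z)" for n by (rule vnorm_nonneg)
    show "vnorm (s n - z) \<le> inverse (real (Suc n))" for n using s(2)[of n] vnorm_minus_commute[of z "s n"] by simp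
  qed
  have l1: "(\<lambda>n. quad (fval y) (s n)) \<longlonglongrightarrow> quad (fval y) z"
    by (rule bounded_form_quad_tendsto[OF Vf_is_form[OF y] Vf_positive[OF y] Uy bY c])
  have l2: "(\<lambda>n. quad (fval u) (s n)) \<longlonglongrightarrow> quad (fval u) z"
    by (rule bounded_form_quad_tendsto[OF Vf_is_form[OF u] Vf_positive[OF u] Uu bu c])
  have "(\<lambda>n. quad (fval y) (s n)) = (\<lambda>n. quad (fval u) (s n))" using eq s(1) unfolding quad_def by simp
  with l1 l2 have "quad (fval y) z = quad (fval u) z" using LIMSEQ_unique by metis
  thus "Re (fval y z z) = Re (fval u z z)" unfolding quad_def .
qed

lemma obar_oplus_eq_Some: "obar_oplus sc ip x y = Some w \<longleftrightarrow>
   oplus_defined ip x y \<and> regular_part sc ip (form_add x y) = form_add (regular_part sc ip x) (regular_part sc ip y)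
   \<and> w = form_add x y"
  unfolding obar_oplus_def by auto

lemma oplus_defined_commute: "oplus_defined ip x y = oplus_defined ip y x" unfolding oplus_defined_def by auto

lemma oplus_defined_dense:
  assumes x: "x \<in> Vf sc ip" and y: "y \<in> Vf sc ip" and od: "oplus_defined ip x y"
  shows "dense_in ip (fdom x \<inter> fdom y)"
proof -
  have dx: "dense_in ip (fdom x)" and dy: "dense_in ip (fdom y)"
    using Vf_is_form[OF x] Vf_is_form[OF y] unfolding is_form_def by auto
  show ?thesis using od Vf_bounded_dom[OF x] Vf_bounded_dom[OF y] dx dy unfolding oplus_defined_def by auto
qed

lemma bounded_form_add_left:
  assumes x: "x \<in> Vf sc ip" and y: "y \<in> Vf sc ip" and od: "oplus_defined ip x y"
    and B: "bounded_form ip (form_add x y)"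
  shows "bounded_form ip x"
proof (cases "bounded_form ip x")
  case True thus ?thesis .
next
  case False
  hence "fdom x \<subseteq> fdom y" using od Vf_bounded_dom[OF y] unfolding oplus_defined_def by auto
  hence sub: "fdom x \<subseteq> fdom (form_add x y)" by auto
  show ?thesis
  proof (rule bounded_form_mono[OF B sub])
    fix z assume z: "z \<in> fdom x"
    hence "z \<in> fdom y" using sub by auto
    hence "0 \<le> Re (fval y z z)" using Vf_positive[OF y] unfolding positive_form_def by blast
    thus "Re (fval x z z) \<le> Re (fval (form_add x y) z z)" using z sub by (auto simp: fval_form_add)
  qed
qed

lemma bounded_form_add_iff:
  assumes x: "x \<in> Vf sc ip" and y: "y \<in> Vf sc ip" and od: "oplus_defined ip x y"
  shows "bounded_form ip (form_add x y) \<longleftrightarrow> bounded_form ip x \<and> bounded_form ip y"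
proof
  assume B: "bounded_form ip (form_add x y)"
  show "bounded_form ip x \<and> bounded_form ip y"
  proof
    show "bounded_form ip x" by (rule bounded_form_add_left[OF x y od B])
    have od': "oplus_defined ip y x" using od oplus_defined_commute by blast
    have "bounded_form ip (form_add y x)" using B form_add_commute[of x y] by simp
    thus "bounded_form ip y" by (rule bounded_form_add_left[OF y x od'])
  qed
next
  assume "bounded_form ip x \<and> bounded_form ip y"
  thus "bounded_form ip (form_add x y)" using bounded_form_add by blast
qed

lemma form_add_Vf:
  assumes x: "x \<in> Vf sc ip" and y: "y \<in> Vf sc ip" and od: "oplus_defined ip x y"
  shows "form_add x y \<in> Vf sc ip"
  unfolding Vf_def
proof (intro CollectI conjI impI)
  show "is_form sc ip (form_add x y)" by (rule is_form_form_add[OF Vf_is_form[OF x] Vf_is_form[OF y] oplus_defined_dense[OF x y od]])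
  show "positive_form (form_add x y)" by (rule positive_form_add[OF Vf_positive[OF x] Vf_positive[OF y]])
  assume "bounded_form ip (form_add x y)"
  hence "bounded_form ip x" "bounded_form ip y" using bounded_form_add_iff[OF x y od] by auto
  thus "fdom (form_add x y) = UNIV" using Vf_bounded_dom[OF x] Vf_bounded_dom[OF y] by simp
qed

lemma obar_oplus_Vf:
  "x \<in> Vf sc ip \<Longrightarrow> y \<in> Vf sc ip \<Longrightarrow> obar_oplus sc ip x y = Some w \<Longrightarrow> w \<in> Vf sc ip"
  unfolding obar_oplus_eq_Some by (auto intro: form_add_Vf)

lemma obar_oplus_commute: "obar_oplus sc ip x y = obar_oplus sc ip y x"
  unfolding obar_oplus_def using oplus_defined_commute[of x y] form_add_commute[of x y]
    form_add_commute[of "regular_part sc ip x" "regular_part sc ip y"] by simp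

lemma obar_oplus_eq_zero:
  assumes x: "x \<in> Vf sc ip" and y: "y \<in> Vf sc ip"
    and e: "obar_oplus sc ip x y = Some zero_form"
  shows "x = zero_form \<and> y = zero_form"
proof -
  have s: "form_add x y = zero_form" using e unfolding obar_oplus_eq_Some by simp
  hence dom: "fdom x = UNIV" "fdom y = UNIV" using fdom_form_add[of x y] by auto
  have v: "fval x z z + fval y z z = 0" for z
    using arg_cong[OF s, of "\<lambda>f. fval f z z"] dom by (simp add: fval_form_add)
  have px: "0 \<le> Re (fval x z z)" and py: "0 \<le> Re (fval y z z)" for z
    using Vf_positive[OF x] Vf_positive[OF y] dom unfolding positive_form_def by auto
  have rx: "Re (fval x z z) = 0" and ry: "Re (fval y z z) = 0" for z
    using v[of z] px[of z] py[of z] by (metis add_nonneg_eq_0_iff plus_complex.sel(1) zero_complex.sel(1))+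
  have "x = zero_form"
    by (rule positive_form_eqI[OF Vf_is_form[OF x] is_form_zero Vf_positive[OF x] positive_form_zero]) (use dom rx in auto)
  moreover have "y = zero_form"
    by (rule positive_form_eqI[OF Vf_is_form[OF y] is_form_zero Vf_positive[OF y] positive_form_zero]) (use dom ry in auto)
  ultimately show ?thesis by blast
qed

lemma form_add_cancel:
  assumes x: "x \<in> Vf sc ip" and y: "y \<in> Vf sc ip" and u: "u \<in> Vf sc ip"
    and oy: "oplus_defined ip x y" and ou: "oplus_defined ip x u" and eq: "form_add x y = form_add x u"
  shows "y = u"
proof -
  have dom: "fdom x \<inter> fdom y = fdom x \<inter> fdom u" using arg_cong[OF eq, of fdom] by simp
  have agree: "fval y z z = fval u z z" if z: "z \<in> fdom x" "z \<in> fdom y" for z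
  proof -
    have "z \<in> fdom u" using z dom by blast
    thus ?thesis using arg_cong[OF eq, of "\<lambda>f. fval f z z"] z by (simp add: fval_form_add)
  qed
  have eqI: "fdom y = fdom u \<Longrightarrow> (\<And>z. z \<in> fdom y \<Longrightarrow> Re (fval y z z) = Re (fval u z z)) \<Longrightarrow> y = u"
    by (rule positive_form_eqI[OF Vf_is_form[OF y] Vf_is_form[OF u] Vf_positive[OF y] Vf_positive[OF u]])
  show ?thesis
  proof (cases "bounded_form ip x")
    case True
    hence "fdom x = UNIV" using Vf_bounded_dom[OF x] by simp
    thus ?thesis using eqI dom agree by simp
  next
    case unbounded_x: False
    show ?thesis
    proof (cases "bounded_form ip y \<and> bounded_form ip u")
      case True
      show ?thesis
      proof (rule bounded_forms_eq_if_dense_eq[OF y u _ _ form_dense[OF Vf_is_form[OF x]]])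
        show "bounded_form ip y" "bounded_form ip u" using True by auto
        show "Re (fval y z z) = Re (fval u z z)" if "z \<in> fdom x" for z
          using agree that Vf_bounded_dom[OF y] True by simp
      qed
    next
      case False
      text \<open>If, say, \<open>y\<close> is bounded and \<open>u\<close> is not, then \<open>u\<close> lives on \<open>D(x)\<close> and agrees with \<open>y\<close>
        there, so it would be bounded as well.\<close>
      have "fdom x = fdom y \<and> fdom x = fdom u"
      proof (rule ccontr)
        assume "\<not> (fdom x = fdom y \<and> fdom x = fdom u)"
        then consider "bounded_form ip y" "\<not> bounded_form ip u" "fdom x = fdom u"
          | "bounded_form ip u" "\<not> bounded_form ip y" "fdom x = fdom y"
          using oy ou unbounded_x False unfolding oplus_defined_def by blast
        thus False
        proof cases
          case 1
          have "bounded_form ip u"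
            by (rule bounded_form_mono[OF 1(1)]) (use agree 1 Vf_bounded_dom[OF y] in auto)
          with 1 show False by simp
        next
          case 2
          have "bounded_form ip y"
            by (rule bounded_form_mono[OF 2(1)]) (use agree 2 Vf_bounded_dom[OF u] in auto)
          with 2 show False by simp
        qed
      qed
      thus ?thesis using eqI agree by auto
    qed
  qed
qed

lemma obar_oplus_cancel:
  assumes x: "x \<in> Vf sc ip" and y: "y \<in> Vf sc ip" and u: "u \<in> Vf sc ip"
    and nn: "obar_oplus sc ip x y \<noteq> None" and e: "obar_oplus sc ip x y = obar_oplus sc ip x u"
  shows "y = u"
proof -
  obtain w where w: "obar_oplus sc ip x y = Some w" using nn by blast
  have 1: "oplus_defined ip x y" "w = form_add x y" using w unfolding obar_oplus_eq_Some by auto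
  have w2: "obar_oplus sc ip x u = Some w" using w e by simp
  have 2: "oplus_defined ip x u" "w = form_add x u" using w2 unfolding obar_oplus_eq_Some by auto
  show ?thesis using form_add_cancel[OF x y u 1(1) 2(1)] 1(2) 2(2) by simp
qed

lemma oplus_defined_assoc:
  assumes x: "x \<in> Vf sc ip" and y: "y \<in> Vf sc ip" and u: "u \<in> Vf sc ip"
    and oxy: "oplus_defined ip x y" and oxy_u: "oplus_defined ip (form_add x y) u"
    and unbounded: "\<not> (bounded_form ip y \<and> bounded_form ip u)"
  shows "fdom y \<inter> fdom u \<subseteq> fdom x" "oplus_defined ip y u" "oplus_defined ip x (form_add y u)"
proof -
  have "bounded_form ip x \<Longrightarrow> fdom x = UNIV" "bounded_form ip y \<Longrightarrow> fdom y = UNIV"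
    "bounded_form ip u \<Longrightarrow> fdom u = UNIV"
    using Vf_bounded_dom x y u by blast+
  moreover have "bounded_form ip x \<or> bounded_form ip y \<or> fdom x = fdom y"
    using oxy unfolding oplus_defined_def .
  moreover have "(bounded_form ip x \<and> bounded_form ip y) \<or> bounded_form ip u \<or> fdom x \<inter> fdom y = fdom u"
    using oxy_u bounded_form_add_iff[OF x y oxy] unfolding oplus_defined_def by simp
  ultimately show "fdom y \<inter> fdom u \<subseteq> fdom x" "oplus_defined ip y u" "oplus_defined ip x (form_add y u)"
    using unbounded unfolding oplus_defined_def by auto
qed

end

subsection \<open>Closed forms and the regular part\<close>

locale nontrivial_hilbert_space = hilbert_space +
  assumes nontrivial: "\<exists>v::'a. v \<noteq> 0"
begin

lemma exists_unit_vector: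
  assumes d: "dense_in ip S" and ls: "lin_subspace sc S"
  shows "\<exists>u\<in>S. vnorm u = 1"
proof -
  obtain v :: 'a where v: "v \<noteq> 0" using nontrivial by blast
  have "vnorm v \<noteq> 0" using vnorm_eq_zero v by blast
  hence vp: "vnorm v > 0" using vnorm_nonneg[of v] by linarith
  then obtain y where y: "y \<in> S" "vnorm (v - y) < vnorm v" using d unfolding dense_in_def by blast
  have "y \<noteq> 0" using y by auto
  hence yp: "vnorm y > 0" using vnorm_eq_zero vnorm_nonneg[of y] by (metis less_eq_real_def)
  let ?u = "sc (complex_of_real (1 / vnorm y)) y"
  have "?u \<in> S" using subspace_scale[OF ls y(1)] .
  moreover have "vnorm ?u = 1" using yp by (simp add: vnorm_scale norm_divide)
  ultimately show ?thesis by blast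
qed

lemma lower_bound_nonneg:
  assumes F: "is_form sc ip s" and P: "positive_form s"
  shows "0 \<le> lower_bound ip s"
proof -
  have "\<exists>u\<in>fdom s. vnorm u = 1" using exists_unit_vector F sesq_subspace[OF form_sesquilinear[OF F]] unfolding is_form_def by blast
  hence ne: "{Re (fval s x x) | x. x \<in> fdom s \<and> vnorm x = 1} \<noteq> {}" by blast
  show ?thesis unfolding lower_bound_def
    by (rule cInf_greatest[OF ne]) (use P in \<open>auto simp: positive_form_def\<close>)
qed

lemma form_norm_sq:
  assumes F: "is_form sc ip s" and P: "positive_form s" and x: "x \<in> fdom s"
    and lb: "0 \<le> lower_bound ip s"
  shows "(form_norm ip s x)^2 = quad (fval s) x + (1 + lower_bound ip s) * (vnorm x)^2"
proof -
  have "0 \<le> quad (fval s) x" using form_quad_nonneg[OF F P x] .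
  thus ?thesis unfolding form_norm_def quad_def using lb by simp
qed

lemma form_norm_bounds:
  assumes F: "is_form sc ip s" and P: "positive_form s" and x: "x \<in> fdom s"
    and lb: "0 \<le> lower_bound ip s"
  shows "quad (fval s) x \<le> (form_norm ip s x)^2" "vnorm x \<le> form_norm ip s x" "0 \<le> form_norm ip s x"
proof -
  have q0: "0 \<le> quad (fval s) x" using form_quad_nonneg[OF F P x] .
  have n0: "0 \<le> (vnorm x)^2" by simp
  have e: "(form_norm ip s x)^2 = quad (fval s) x + (1 + lower_bound ip s) * (vnorm x)^2"
    using form_norm_sq[OF F P x lb] .
  have "(1 + lower_bound ip s) * (vnorm x)^2 \<ge> (vnorm x)^2" using lb n0
    by (metis add.commute le_add_same_cancel2 mult_le_cancel_right1 mult_nonneg_nonneg distrib_right mult_1 )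
  hence a: "(vnorm x)^2 \<le> (form_norm ip s x)^2" using e q0 by linarith
  show "quad (fval s) x \<le> (form_norm ip s x)^2" using e q0 lb n0 by simp
  show f0: "0 \<le> form_norm ip s x" unfolding form_norm_def using q0 lb n0
    by (simp add: quad_def)
  show "vnorm x \<le> form_norm ip s x" using a f0 by (rule power2_le_imp_le)
qed

definition quad_cauchy :: "('a \<Rightarrow> 'a \<Rightarrow> complex) \<Rightarrow> (nat \<Rightarrow> 'a) \<Rightarrow> bool" where
  "quad_cauchy f X \<longleftrightarrow> (\<forall>e>0. \<exists>N. \<forall>m\<ge>N. \<forall>k\<ge>N. quad f (X m - X k) < e)"

text \<open>Since the form norm is equivalent to \<open>\<parallel>x\<parallel> + \<surd>t[x]\<close>, closedness amounts to: every sequence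
  in \<open>D(t)\<close> that is Cauchy both in \<open>H\<close> and for \<open>t\<close> converges in both senses to a point of \<open>D(t)\<close>.\<close>
lemma closed_formI:
  assumes F: "is_form sc ip s" and P: "positive_form s"
    and complete: "\<And>X. (\<forall>k. X k \<in> fdom s) \<Longrightarrow> quad_cauchy (fval s) X \<Longrightarrow> hcauchy X \<Longrightarrow>
      \<exists>L\<in>fdom s. hconverges X L \<and> (\<lambda>k. quad (fval s) (X k - L)) \<longlonglongrightarrow> 0"
  shows "closed_form sc ip s"
  unfolding closed_form_def
proof (intro conjI F P allI impI)
  have lb: "0 \<le> lower_bound ip s" using lower_bound_nonneg[OF F P] .
  have DL: "lin_subspace sc (fdom s)" using sesq_subspace[OF form_sesquilinear[OF F]] .
  fix X :: "nat \<Rightarrow> 'a"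
  assume A: "(\<forall>k. X k \<in> fdom s) \<and> (\<forall>e>0. \<exists>N. \<forall>m\<ge>N. \<forall>k\<ge>N. form_norm ip s (X m - X k) < e)"
  hence XD: "\<And>k. X k \<in> fdom s" by blast
  have dD: "\<And>m k. X m - X k \<in> fdom s" using subspace_diff[OF DL] XD by blast
  have X_quad_cauchy: "quad_cauchy (fval s) X"
    unfolding quad_cauchy_def
  proof (intro allI impI)
    fix e :: real assume e: "e > 0"
    have "sqrt e > 0" using e by simp
    then obtain N where N: "\<forall>m\<ge>N. \<forall>k\<ge>N. form_norm ip s (X m - X k) < sqrt e" using A by blast
    show "\<exists>N. \<forall>m\<ge>N. \<forall>k\<ge>N. quad (fval s) (X m - X k) < e"
    proof (intro exI allI impI)
      fix m k assume "N \<le> m" "N \<le> k"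
      hence "form_norm ip s (X m - X k) < sqrt e" using N by blast
      hence "(form_norm ip s (X m - X k))^2 < (sqrt e)^2"
        using form_norm_bounds(3)[OF F P dD lb] by (intro power_strict_mono) auto
      thus "quad (fval s) (X m - X k) < e" using form_norm_bounds(1)[OF F P dD lb, of m k] e by simp
    qed
  qed
  have X_cauchy: "hcauchy X" unfolding hcauchy_def
  proof (intro allI impI)
    fix e :: real assume e: "e > 0"
    then obtain N where N: "\<forall>m\<ge>N. \<forall>k\<ge>N. form_norm ip s (X m - X k) < e" using A by auto
    show "\<exists>N. \<forall>m\<ge>N. \<forall>k\<ge>N. vnorm (X m - X k) < e"
      using N form_norm_bounds(2)[OF F P dD lb] by (meson le_less_trans)
  qed
  obtain L where L: "L \<in> fdom s" "hconverges X L" "(\<lambda>k. quad (fval s) (X k - L)) \<longlonglongrightarrow> 0"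
    using complete[OF _ X_quad_cauchy X_cauchy] XD by blast
  have "(\<lambda>k. sqrt (quad (fval s) (X k - L) + (1 + lower_bound ip s) * (vnorm (X k - L))^2)) \<longlonglongrightarrow>
      sqrt (0 + (1 + lower_bound ip s) * 0^2)"
    using L(2,3) unfolding hconverges_def by (intro tendsto_real_sqrt tendsto_add tendsto_mult tendsto_power tendsto_const)
  hence "(\<lambda>k. form_norm ip s (X k - L)) \<longlonglongrightarrow> 0" unfolding form_norm_def quad_def by simp
  thus "\<exists>L\<in>fdom s. (\<lambda>k. form_norm ip s (X k - L)) \<longlonglongrightarrow> 0" using L(1) by blast
qed

lemma closed_formD:
  assumes C: "closed_form sc ip s"
    and XD: "\<And>k. X k \<in> fdom s"
    and X_quad_cauchy: "quad_cauchy (fval s) X" and X_cauchy: "hcauchy X"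
  shows "\<exists>L\<in>fdom s. hconverges X L \<and> (\<lambda>k. quad (fval s) (X k - L)) \<longlonglongrightarrow> 0"
proof -
  have F: "is_form sc ip s" and P: "positive_form s" using C unfolding closed_form_def by auto
  have lb: "0 \<le> lower_bound ip s" using lower_bound_nonneg[OF F P] .
  have DL: "lin_subspace sc (fdom s)" using sesq_subspace[OF form_sesquilinear[OF F]] .
  have dD: "\<And>m k. X m - X k \<in> fdom s" using subspace_diff[OF DL] XD by blast
  let ?c = "1 + lower_bound ip s"
  have c1: "1 \<le> ?c" using lb by simp
  have X_norm_cauchy: "\<forall>e>0. \<exists>N. \<forall>m\<ge>N. \<forall>k\<ge>N. form_norm ip s (X m - X k) < e"
  proof (intro allI impI)
    fix e :: real assume e: "e > 0"
    have "e^2 / 4 > 0" using e by simp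
    then obtain N1 where N1: "\<forall>m\<ge>N1. \<forall>k\<ge>N1. quad (fval s) (X m - X k) < e^2 / 4"
      using X_quad_cauchy unfolding quad_cauchy_def by blast
    have "e / (2 * ?c) > 0" using e c1 by simp
    then obtain N2 where N2: "\<forall>m\<ge>N2. \<forall>k\<ge>N2. vnorm (X m - X k) < e / (2 * ?c)"
      using X_cauchy unfolding hcauchy_def by blast
    show "\<exists>N. \<forall>m\<ge>N. \<forall>k\<ge>N. form_norm ip s (X m - X k) < e"
    proof (intro exI allI impI)
      fix m k assume mk: "max N1 N2 \<le> m" "max N1 N2 \<le> k"
      have q: "quad (fval s) (X m - X k) < e^2 / 4" using N1 mk by auto
      have n: "vnorm (X m - X k) < e / (2 * ?c)" using N2 mk by auto
      have "(vnorm (X m - X k))^2 \<le> (e / (2 * ?c))^2"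
        using n vnorm_nonneg by (intro power_mono) (auto intro: less_imp_le)
      hence "?c * (vnorm (X m - X k))^2 \<le> ?c * (e / (2 * ?c))^2" using c1 by (intro mult_left_mono) auto
      also have "?c * (e / (2 * ?c))^2 = e^2 / (4 * ?c)"
      proof -
        have gen: "\<And>c e::real. c \<noteq> 0 \<Longrightarrow> c * (e / (2 * c))^2 = e^2 / (4 * c)"
          by (simp add: power2_eq_square field_simps)
        show ?thesis by (rule gen) (use c1 in simp)
      qed
      also have "\<dots> \<le> e^2 / 4" using c1 e by (intro divide_left_mono) auto
      finally have cb: "?c * (vnorm (X m - X k))^2 \<le> e^2 / 4" .
      have "(form_norm ip s (X m - X k))^2 < e^2"
        using form_norm_sq[OF F P dD lb, of m k] q cb zero_le_power2[of e] by linarith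
      thus "form_norm ip s (X m - X k) < e" using e by (meson less_imp_le power_less_imp_less_base)
    qed
  qed
  obtain L where L: "L \<in> fdom s" "(\<lambda>k. form_norm ip s (X k - L)) \<longlonglongrightarrow> 0"
    using C XD X_norm_cauchy unfolding closed_form_def by blast
  have dL: "\<And>k. X k - L \<in> fdom s" using subspace_diff[OF DL] XD L(1) by blast
  have "(\<lambda>k. vnorm (X k - L)) \<longlonglongrightarrow> 0"
    using L(2) by (rule tendsto_null_sandwich) (auto intro: vnorm_nonneg form_norm_bounds(2)[OF F P dL lb])
  moreover have "(\<lambda>k. quad (fval s) (X k - L)) \<longlonglongrightarrow> 0"
  proof (rule tendsto_null_sandwich)
    show "(\<lambda>k. (form_norm ip s (X k - L))^2) \<longlonglongrightarrow> 0" using tendsto_power[OF L(2), of 2] by simp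
  qed (auto intro: form_quad_nonneg[OF F P dL] form_norm_bounds(1)[OF F P dL lb])
  ultimately show ?thesis using L(1) unfolding hconverges_def by blast
qed

lemma closed_form_add:
  assumes a: "closed_form sc ip a" and b: "closed_form sc ip b"
    and d: "dense_in ip (fdom a \<inter> fdom b)"
  shows "closed_form sc ip (form_add a b)"
proof -
  have aF: "is_form sc ip a" and aP: "positive_form a" and bF: "is_form sc ip b" and bP: "positive_form b"
    using a b unfolding closed_form_def by auto
  show ?thesis
  proof (rule closed_formI[OF is_form_form_add[OF aF bF d] positive_form_add[OF aP bP]])
    fix X :: "nat \<Rightarrow> 'a"
    assume XD: "\<forall>k. X k \<in> fdom (form_add a b)"
      and X_quad_cauchy: "quad_cauchy (fval (form_add a b)) X" and X_cauchy: "hcauchy X"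
    have XA: "\<And>k. X k \<in> fdom a" and XB: "\<And>k. X k \<in> fdom b" using XD by auto
    have dA: "\<And>m k. X m - X k \<in> fdom a" using subspace_diff[OF form_subspace[OF aF]] XA by blast
    have dB: "\<And>m k. X m - X k \<in> fdom b" using subspace_diff[OF form_subspace[OF bF]] XB by blast
    have qa: "\<And>m k. quad (fval a) (X m - X k) \<le> quad (fval (form_add a b)) (X m - X k)"
      using quad_form_add[OF dA dB] form_quad_nonneg[OF bF bP dB] by simp
    have qb: "\<And>m k. quad (fval b) (X m - X k) \<le> quad (fval (form_add a b)) (X m - X k)"
      using quad_form_add[OF dA dB] form_quad_nonneg[OF aF aP dA] by simp
    have "quad_cauchy (fval a) X" "quad_cauchy (fval b) X"
      using X_quad_cauchy qa qb unfolding quad_cauchy_def by (meson le_less_trans)+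
    obtain La where La: "La \<in> fdom a" "hconverges X La" "(\<lambda>k. quad (fval a) (X k - La)) \<longlonglongrightarrow> 0"
      using closed_formD[OF a XA \<open>quad_cauchy (fval a) X\<close> X_cauchy] by blast
    obtain Lb where Lb: "Lb \<in> fdom b" "hconverges X Lb" "(\<lambda>k. quad (fval b) (X k - Lb)) \<longlonglongrightarrow> 0"
      using closed_formD[OF b XB \<open>quad_cauchy (fval b) X\<close> X_cauchy] by blast
    have e: "La = Lb" using hconverges_unique[OF La(2) Lb(2)] .
    have dL: "\<And>k. X k - La \<in> fdom a" "\<And>k. X k - La \<in> fdom b"
      using subspace_diff[OF form_subspace[OF aF]] subspace_diff[OF form_subspace[OF bF]] XA XB La(1) Lb(1) e by auto
    have "(\<lambda>k. quad (fval (form_add a b)) (X k - La)) = (\<lambda>k. quad (fval a) (X k - La) + quad (fval b) (X k - La))"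
      using quad_form_add dL by blast
    moreover have "(\<lambda>k. quad (fval a) (X k - La) + quad (fval b) (X k - La)) \<longlonglongrightarrow> 0"
      using tendsto_add[OF La(3) Lb(3)[folded e]] by simp
    ultimately show "\<exists>L\<in>fdom (form_add a b). hconverges X L \<and>
        (\<lambda>k. quad (fval (form_add a b)) (X k - L)) \<longlonglongrightarrow> 0"
      using La(1,2) Lb(1) e by auto
  qed
qed

lemma closable_form_add:
  assumes a: "closable_form sc ip a" and b: "closable_form sc ip b"
    and d: "dense_in ip (fdom a \<inter> fdom b)"
  shows "closable_form sc ip (form_add a b)"
proof -
  obtain ca where ca: "closed_form sc ip ca" "fdom a \<subseteq> fdom ca" "\<forall>x\<in>fdom a. \<forall>y\<in>fdom a. fval ca x y = fval a x y"
    using a unfolding closable_form_def by blast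
  obtain cb where cb: "closed_form sc ip cb" "fdom b \<subseteq> fdom cb" "\<forall>x\<in>fdom b. \<forall>y\<in>fdom b. fval cb x y = fval b x y"
    using b unfolding closable_form_def by blast
  have "dense_in ip (fdom ca \<inter> fdom cb)" using dense_in_mono[OF d] ca(2) cb(2) by blast
  hence C: "closed_form sc ip (form_add ca cb)" using closed_form_add[OF ca(1) cb(1)] by blast
  show ?thesis unfolding closable_form_def
  proof (intro exI conjI)
    show "closed_form sc ip (form_add ca cb)" by (rule C)
    show "fdom (form_add a b) \<subseteq> fdom (form_add ca cb)" using ca(2) cb(2) by auto
    show "\<forall>x\<in>fdom (form_add a b). \<forall>y\<in>fdom (form_add a b). fval (form_add ca cb) x y = fval (form_add a b) x y"
      using ca cb by (auto simp: fval_form_add)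
  qed
qed

lemma bounded_form_closed:
  assumes F: "is_form sc ip t" and P: "positive_form t"
    and U: "fdom t = UNIV" and B: "bounded_form ip t"
  shows "closed_form sc ip t"
proof (rule closed_formI[OF F P])
  obtain M where M: "M \<ge> 0" "\<And>x. quad (fval t) x \<le> M * (vnorm x)^2" using bounded_form_quad_le[OF F P U B] by blast
  fix X :: "nat \<Rightarrow> 'a" assume "hcauchy X"
  then obtain L where L: "hconverges X L" using hcauchy_hconverges by blast
  have "(\<lambda>k. quad (fval t) (X k - L)) \<longlonglongrightarrow> 0"
  proof (rule tendsto_null_sandwich)
    show "(\<lambda>k. M * (vnorm (X k - L))^2) \<longlonglongrightarrow> 0"
      using tendsto_mult[OF tendsto_const tendsto_power[OF L[unfolded hconverges_def], of 2], of M] by simp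
    show "0 \<le> quad (fval t) (X k - L)" for k using form_quad_nonneg[OF F P] U by simp
    show "quad (fval t) (X k - L) \<le> M * (vnorm (X k - L))^2" for k by (rule M(2))
  qed
  thus "\<exists>L\<in>fdom t. hconverges X L \<and> (\<lambda>k. quad (fval t) (X k - L)) \<longlonglongrightarrow> 0" using L U by blast
qed

definition form_closure :: "'a form \<Rightarrow> 'a form" where "form_closure t = make_form (closure_dom t) (polar_form (closure_quad t))"

definition regular_form :: "'a form \<Rightarrow> 'a form" where "regular_form t = make_form (fdom t) (polar_form (closure_quad t))"

context
  fixes t assumes form: "is_form sc ip t" and pos: "positive_form t"
begin

lemma closure_polar_sesquilinear: "sesquilinear_on (closure_dom t) (polar_form (closure_quad t))"
  by (rule polar_form_sesquilinear[OF closure_dom_subspace[OF form pos] closure_quad_nonneg[OF form pos]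
        closure_quad_parallelogram[OF form pos] closure_quad_scale[OF form pos]])
lemma closure_polar_self: "x \<in> closure_dom t \<Longrightarrow> polar_form (closure_quad t) x x = of_real (closure_quad t x)"
  by (rule polar_form_self[OF closure_dom_subspace[OF form pos] closure_quad_nonneg[OF form pos]
        closure_quad_parallelogram[OF form pos] closure_quad_scale[OF form pos]])
lemma closure_dom_dense: "dense_in ip (closure_dom t)"
  using dense_in_mono[OF form_dense[OF form] dom_subset_closure_dom[OF form pos]] .

lemma is_form_form_closure: "is_form sc ip (form_closure t)"
  unfolding form_closure_def by (rule is_form_make_form[OF closure_polar_sesquilinear closure_dom_dense])
lemma positive_form_closure: "positive_form (form_closure t)"
  unfolding positive_form_def form_closure_def fdom_make_form fval_make_form using closure_polar_self closure_quad_nonneg[OF form pos] by simp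
lemma quad_form_closure: "x \<in> closure_dom t \<Longrightarrow> quad (fval (form_closure t)) x = closure_quad t x"
  unfolding quad_def form_closure_def fval_make_form using closure_polar_self by simp

lemma closed_form_closure: "closed_form sc ip (form_closure t)"
proof (rule closed_formI[OF is_form_form_closure positive_form_closure])
  fix X :: "nat \<Rightarrow> 'a"
  assume XD: "\<forall>k. X k \<in> fdom (form_closure t)"
    and X_quad_cauchy: "quad_cauchy (fval (form_closure t)) X" and X_cauchy: "hcauchy X"
  have XD': "\<And>k. X k \<in> closure_dom t" using XD unfolding form_closure_def by simp
  have dD: "\<And>m k. X m - X k \<in> closure_dom t" using subspace_diff[OF closure_dom_subspace[OF form pos]] XD' by blast
  obtain x where cx: "hconverges X x" using hcauchy_hconverges[OF X_cauchy] by blast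
  have closure_cauchy: "\<And>e. e > 0 \<Longrightarrow> \<exists>N. \<forall>m\<ge>N. \<forall>k\<ge>N. closure_quad t (X m - X k) < e"
    using X_quad_cauchy quad_form_closure[OF dD] unfolding quad_cauchy_def by simp
  have r: "x \<in> closure_dom t \<and> (\<lambda>k. closure_quad t (X k - x)) \<longlonglongrightarrow> 0"
    using closure_quad_complete[OF form pos XD' closure_cauchy cx] by blast
  have "(\<lambda>k. quad (fval (form_closure t)) (X k - x)) = (\<lambda>k. closure_quad t (X k - x))"
    using quad_form_closure subspace_diff[OF closure_dom_subspace[OF form pos]] XD' r by blast
  thus "\<exists>L\<in>fdom (form_closure t). hconverges X L \<and>
      (\<lambda>k. quad (fval (form_closure t)) (X k - L)) \<longlonglongrightarrow> 0"
    using r cx unfolding form_closure_def by auto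
qed

lemma regular_form_sesquilinear: "sesquilinear_on (fdom t) (polar_form (closure_quad t))"
  by (rule sesquilinear_on_subset[OF closure_polar_sesquilinear form_subspace[OF form] dom_subset_closure_dom[OF form pos]])
lemma is_form_regular_form: "is_form sc ip (regular_form t)"
  unfolding regular_form_def by (rule is_form_make_form[OF regular_form_sesquilinear form_dense[OF form]])
lemma positive_regular_form: "positive_form (regular_form t)"
  unfolding positive_form_def regular_form_def fdom_make_form fval_make_form
  using closure_polar_self closure_quad_nonneg[OF form pos] dom_subset_closure_dom[OF form pos] by auto
lemma quad_regular_form: "x \<in> fdom t \<Longrightarrow> quad (fval (regular_form t)) x = closure_quad t x"
  unfolding quad_def regular_form_def fval_make_form using closure_polar_self dom_subset_closure_dom[OF form pos] by auto

lemma fdom_regular_form [simp]: "fdom (regular_form t) = fdom t"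
  unfolding regular_form_def by simp

lemma closable_regular_form: "closable_form sc ip (regular_form t)"
  unfolding closable_form_def
proof (intro exI conjI)
  show "closed_form sc ip (form_closure t)" by (rule closed_form_closure)
  show "fdom (regular_form t) \<subseteq> fdom (form_closure t)"
    unfolding regular_form_def form_closure_def using dom_subset_closure_dom[OF form pos] by simp
  show "\<forall>x\<in>fdom (regular_form t). \<forall>y\<in>fdom (regular_form t). fval (form_closure t) x y = fval (regular_form t) x y"
    unfolding regular_form_def form_closure_def fval_make_form fdom_make_form using dom_subset_closure_dom[OF form pos] by auto
qed

lemma reg_candidate_regular_form: "reg_candidate sc ip t (regular_form t)"
  unfolding reg_candidate_def
  using is_form_regular_form positive_regular_form closable_regular_form quad_regular_form
    closure_quad_le_quad[OF form pos]
  unfolding quad_def by auto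

lemma closed_form_quad_le_limit_quad:
  assumes closed: "closed_form sc ip s" and dom: "fdom t \<subseteq> fdom s"
    and le: "\<And>y. y \<in> fdom t \<Longrightarrow> quad (fval s) y \<le> quad (fval t) y"
    and X: "form_approx t x X" and x: "x \<in> fdom s"
  shows "quad (fval s) x \<le> limit_quad t X"
proof -
  have s_form: "is_form sc ip s" and s_pos: "positive_form s" using closed unfolding closed_form_def by auto
  have X_cauchy: "form_cauchy t X" and X_conv: "hconverges X x" using X unfolding form_approx_def by auto
  have XD: "\<And>k. X k \<in> fdom t" using form_cauchy_in[OF X_cauchy] .
  have XsD: "\<And>k. X k \<in> fdom s" using XD dom by blast
  have s_cauchy: "quad_cauchy (fval s) X"
    unfolding quad_cauchy_def
  proof (intro allI impI)
    fix e :: real assume e: "e > 0"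
    obtain N where N: "\<forall>m\<ge>N. \<forall>k\<ge>N. sqrt (quad (fval t) (X m - X k)) < sqrt e"
      using X_cauchy e unfolding form_cauchy_def by (meson real_sqrt_gt_zero)
    have "quad (fval s) (X m - X k) < e" if "N \<le> m" "N \<le> k" for m k
    proof -
      have "quad (fval t) (X m - X k) < e" using N that by simp
      thus ?thesis using le[OF subspace_diff[OF form_subspace[OF form] XD[of m] XD[of k]]] by linarith
    qed
    thus "\<exists>N. \<forall>m\<ge>N. \<forall>k\<ge>N. quad (fval s) (X m - X k) < e" by blast
  qed
  obtain L where L: "L \<in> fdom s" "hconverges X L" "(\<lambda>k. quad (fval s) (X k - L)) \<longlonglongrightarrow> 0"
    using closed_formD[OF closed XsD s_cauchy hconverges_imp_hcauchy[OF X_conv]] by blast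
  have "L = x" using hconverges_unique[OF L(2) X_conv] .
  have "(\<lambda>k. sqrt (quad (fval s) (X k)) - sqrt (quad (fval s) x)) \<longlonglongrightarrow> 0"
  proof (rule tendsto_rabs_zero_cancel, rule tendsto_null_sandwich)
    show "(\<lambda>k. sqrt (quad (fval s) (X k - x))) \<longlonglongrightarrow> 0"
      using tendsto_real_sqrt[OF L(3)] \<open>L = x\<close> by simp
    show "\<bar>sqrt (quad (fval s) (X k)) - sqrt (quad (fval s) x)\<bar> \<le> sqrt (quad (fval s) (X k - x))" for k
      by (rule sqrt_quad_reverse_triangle[OF form_sesquilinear[OF s_form] positive_form_nonneg[OF s_pos] XsD x])
  qed auto
  hence "(\<lambda>k. (sqrt (quad (fval s) (X k)))\<^sup>2) \<longlonglongrightarrow> (sqrt (quad (fval s) x))\<^sup>2"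
    by (intro tendsto_power) (simp add: LIM_zero_cancel)
  hence "(\<lambda>k. quad (fval s) (X k)) \<longlonglongrightarrow> quad (fval s) x"
    using form_quad_nonneg[OF s_form s_pos] XsD x by simp
  thus ?thesis
    by (rule LIMSEQ_le[OF _ limit_quad_tendsto[OF form pos X_cauchy]]) (use le XD in auto)
qed

lemma regular_form_max:
  assumes r: "reg_candidate sc ip t r"
  shows "\<forall>x\<in>fdom t. Re (fval r x x) \<le> Re (fval (regular_form t) x x)"
proof
  fix x assume x: "x \<in> fdom t"
  have r_dom: "fdom r = fdom t" and r_le: "\<forall>y\<in>fdom t. Re (fval r y y) \<le> Re (fval t y y)"
    and "closable_form sc ip r" using r unfolding reg_candidate_def by auto
  then obtain s where closed: "closed_form sc ip s" and dom: "fdom r \<subseteq> fdom s"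
    and s_r: "\<forall>y\<in>fdom r. \<forall>z\<in>fdom r. fval s y z = fval r y z"
    unfolding closable_form_def by blast
  have le: "quad (fval s) y \<le> quad (fval t) y" if "y \<in> fdom t" for y
    using s_r r_le r_dom that unfolding quad_def by simp
  have "quad (fval s) x \<le> closure_quad t x"
    unfolding closure_quad_def
  proof (rule cInf_greatest)
    show "{limit_quad t X |X. form_approx t x X} \<noteq> {}"
      using x dom_subset_closure_dom[OF form pos] unfolding closure_dom_def by blast
    show "quad (fval s) x \<le> v" if "v \<in> {limit_quad t X |X. form_approx t x X}" for v
      using that closed_form_quad_le_limit_quad[OF closed _ le] dom r_dom x by auto
  qed
  thus "Re (fval r x x) \<le> Re (fval (regular_form t) x x)"
    using quad_regular_form[OF x] s_r r_dom x unfolding quad_def by simp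
qed

lemma regular_part_eq_regular_form: "regular_part sc ip t = regular_form t"
  unfolding regular_part_def
proof (rule the_equality)
  show "reg_candidate sc ip t (regular_form t) \<and> (\<forall>r'. reg_candidate sc ip t r' \<longrightarrow>
      (\<forall>x\<in>fdom t. Re (fval r' x x) \<le> Re (fval (regular_form t) x x)))"
    using reg_candidate_regular_form regular_form_max by blast
  fix r assume A: "reg_candidate sc ip t r \<and> (\<forall>r'. reg_candidate sc ip t r' \<longrightarrow>
      (\<forall>x\<in>fdom t. Re (fval r' x x) \<le> Re (fval r x x)))"
  have rc: "reg_candidate sc ip t r" using A by blast
  have rF: "is_form sc ip r" and rP: "positive_form r" and rd: "fdom r = fdom t"
    using rc unfolding reg_candidate_def by auto
  have le1: "\<forall>x\<in>fdom t. Re (fval (regular_form t) x x) \<le> Re (fval r x x)" using A reg_candidate_regular_form by blast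
  have le2: "\<forall>x\<in>fdom t. Re (fval r x x) \<le> Re (fval (regular_form t) x x)" using regular_form_max[OF rc] .
  show "r = regular_form t"
  proof (rule form_eq_if_diag_eq[OF rF is_form_regular_form])
    show "fdom r = fdom (regular_form t)" using rd by simp
    fix x assume x: "x \<in> fdom r"
    have "Im (fval r x x) = 0" using rP x unfolding positive_form_def by blast
    moreover have "Im (fval (regular_form t) x x) = 0" using positive_regular_form x rd unfolding positive_form_def by simp
    moreover have "Re (fval r x x) = Re (fval (regular_form t) x x)" using le1 le2 x rd by (metis antisym)
    ultimately show "fval r x x = fval (regular_form t) x x" by (simp add: complex_eq_iff)
  qed
qed

lemma regular_part_candidate: "reg_candidate sc ip t (regular_part sc ip t)"
  using reg_candidate_regular_form regular_part_eq_regular_form by simp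
lemma regular_part_max: "reg_candidate sc ip t r \<Longrightarrow> \<forall>x\<in>fdom t. Re (fval r x x) \<le> Re (fval (regular_part sc ip t) x x)"
  using regular_form_max regular_part_eq_regular_form by simp

end

lemma regular_part_unique:
  assumes F: "is_form sc ip t" and Pt: "positive_form t"
    and rc: "reg_candidate sc ip t r"
    and rm: "\<And>r'. reg_candidate sc ip t r' \<Longrightarrow> \<forall>x\<in>fdom t. Re (fval r' x x) \<le> Re (fval r x x)"
  shows "regular_part sc ip t = r"
proof -
  have c1: "reg_candidate sc ip t (regular_part sc ip t)" by (rule regular_part_candidate[OF F Pt])
  have m1: "\<forall>x\<in>fdom t. Re (fval r x x) \<le> Re (fval (regular_part sc ip t) x x)" by (rule regular_part_max[OF F Pt rc])
  have m2: "\<forall>x\<in>fdom t. Re (fval (regular_part sc ip t) x x) \<le> Re (fval r x x)" by (rule rm[OF c1])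
  show ?thesis
  proof (rule positive_form_eqI)
    show "is_form sc ip (regular_part sc ip t)" "positive_form (regular_part sc ip t)"
      "is_form sc ip r" "positive_form r" using c1 rc unfolding reg_candidate_def by auto
    show "fdom (regular_part sc ip t) = fdom r" using c1 rc unfolding reg_candidate_def by auto
    fix x assume "x \<in> fdom (regular_part sc ip t)"
    hence "x \<in> fdom t" using c1 unfolding reg_candidate_def by auto
    thus "Re (fval (regular_part sc ip t) x x) = Re (fval r x x)" using m1 m2 by (metis antisym)
  qed
qed

lemma regular_part_bounded:
  assumes V: "t \<in> Vf sc ip" and B: "bounded_form ip t"
  shows "regular_part sc ip t = t"
proof (rule regular_part_unique[OF Vf_is_form[OF V] Vf_positive[OF V]])
  have C: "closed_form sc ip t" using bounded_form_closed[OF Vf_is_form[OF V] Vf_positive[OF V] Vf_bounded_dom[OF V B] B] .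
  have "closable_form sc ip t" unfolding closable_form_def using C by blast
  thus "reg_candidate sc ip t t" unfolding reg_candidate_def using Vf_is_form[OF V] Vf_positive[OF V] by auto
  fix r' assume "reg_candidate sc ip t r'"
  thus "\<forall>x\<in>fdom t. Re (fval r' x x) \<le> Re (fval t x x)" unfolding reg_candidate_def by blast
qed

lemma reg_candidate_form_add:
  assumes x: "x \<in> Vf sc ip" and y: "y \<in> Vf sc ip"
    and d: "dense_in ip (fdom x \<inter> fdom y)"
  shows "reg_candidate sc ip (form_add x y) (form_add (regular_part sc ip x) (regular_part sc ip y))"
proof -
  have cx: "reg_candidate sc ip x (regular_part sc ip x)" by (rule regular_part_candidate[OF Vf_is_form[OF x] Vf_positive[OF x]])
  have cy: "reg_candidate sc ip y (regular_part sc ip y)" by (rule regular_part_candidate[OF Vf_is_form[OF y] Vf_positive[OF y]])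
  let ?a = "regular_part sc ip x" and ?b = "regular_part sc ip y"
  have aF: "is_form sc ip ?a" and aP: "positive_form ?a" and ac: "closable_form sc ip ?a"
    and ad: "fdom ?a = fdom x" and ale: "\<forall>z\<in>fdom x. Re (fval ?a z z) \<le> Re (fval x z z)"
    using cx unfolding reg_candidate_def by auto
  have bF: "is_form sc ip ?b" and bP: "positive_form ?b" and bc: "closable_form sc ip ?b"
    and bd: "fdom ?b = fdom y" and ble: "\<forall>z\<in>fdom y. Re (fval ?b z z) \<le> Re (fval y z z)"
    using cy unfolding reg_candidate_def by auto
  have d': "dense_in ip (fdom ?a \<inter> fdom ?b)" using d ad bd by simp
  show ?thesis unfolding reg_candidate_def
  proof (intro conjI)
    show "is_form sc ip (form_add ?a ?b)" by (rule is_form_form_add[OF aF bF d'])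
    show "positive_form (form_add ?a ?b)" by (rule positive_form_add[OF aP bP])
    show "closable_form sc ip (form_add ?a ?b)" by (rule closable_form_add[OF ac bc d'])
    show "fdom (form_add ?a ?b) = fdom (form_add x y)" using ad bd by simp
    show "\<forall>z\<in>fdom (form_add x y). Re (fval (form_add ?a ?b) z z) \<le> Re (fval (form_add x y) z z)"
      using ale ble ad bd by (auto simp: fval_form_add intro: add_mono)
  qed
qed

lemma regular_part_candidate_Vf: "x \<in> Vf sc ip \<Longrightarrow> reg_candidate sc ip x (regular_part sc ip x)"
  using regular_part_candidate[OF Vf_is_form Vf_positive] by blast

lemma regular_part_Vf:
  assumes "t \<in> Vf sc ip"
  shows "is_form sc ip (regular_part sc ip t)" "positive_form (regular_part sc ip t)"
    "fdom (regular_part sc ip t) = fdom t"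
  using regular_part_candidate_Vf[OF assms] unfolding reg_candidate_def by auto

lemma obar_oplus_zero:
  assumes x: "x \<in> Vf sc ip"
  shows "obar_oplus sc ip x zero_form = Some x"
proof -
  have od: "oplus_defined ip x zero_form" unfolding oplus_defined_def using bounded_form_zero by blast
  have fx: "form_add x zero_form = x" by (rule form_add_zero[OF Vf_is_form[OF x]])
  have rz: "regular_part sc ip zero_form = zero_form" by (rule regular_part_bounded[OF zero_form_Vf bounded_form_zero])
  have "is_form sc ip (regular_part sc ip x)" using regular_part_candidate_Vf[OF x] unfolding reg_candidate_def by blast
  hence "form_add (regular_part sc ip x) (regular_part sc ip zero_form) = regular_part sc ip x"
    using rz form_add_zero by simp
  thus ?thesis unfolding obar_oplus_eq_Some using od fx by simp
qed

text \<open>The regular part is superadditive, since the sum of the regular parts is a closable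
  minorant of the sum.\<close>
lemma regular_part_superadditive:
  assumes x: "x \<in> Vf sc ip" and y: "y \<in> Vf sc ip" and od: "oplus_defined ip x y"
    and z: "z \<in> fdom x" "z \<in> fdom y"
  shows "Re (fval (regular_part sc ip x) z z) + Re (fval (regular_part sc ip y) z z)
      \<le> Re (fval (regular_part sc ip (form_add x y)) z z)"
proof -
  have xy: "form_add x y \<in> Vf sc ip" by (rule form_add_Vf[OF x y od])
  have "reg_candidate sc ip (form_add x y) (form_add (regular_part sc ip x) (regular_part sc ip y))"
    by (rule reg_candidate_form_add[OF x y oplus_defined_dense[OF x y od]])
  from regular_part_max[OF Vf_is_form[OF xy] Vf_positive[OF xy] this] z show ?thesis
    using regular_part_Vf(3)[OF x] regular_part_Vf(3)[OF y] by (auto simp: fval_form_add)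
qed

lemma regular_part_form_add_eqI:
  assumes x: "x \<in> Vf sc ip" and y: "y \<in> Vf sc ip" and od: "oplus_defined ip x y"
    and le: "\<And>z. z \<in> fdom x \<Longrightarrow> z \<in> fdom y \<Longrightarrow> Re (fval (regular_part sc ip (form_add x y)) z z)
      \<le> Re (fval (regular_part sc ip x) z z) + Re (fval (regular_part sc ip y) z z)"
  shows "regular_part sc ip (form_add x y) = form_add (regular_part sc ip x) (regular_part sc ip y)"
proof (rule positive_form_eqI)
  have xy: "form_add x y \<in> Vf sc ip" by (rule form_add_Vf[OF x y od])
  show "is_form sc ip (regular_part sc ip (form_add x y))" "positive_form (regular_part sc ip (form_add x y))"
    using regular_part_Vf[OF xy] by auto
  have "reg_candidate sc ip (form_add x y) (form_add (regular_part sc ip x) (regular_part sc ip y))"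
    by (rule reg_candidate_form_add[OF x y oplus_defined_dense[OF x y od]])
  thus "is_form sc ip (form_add (regular_part sc ip x) (regular_part sc ip y))"
    "positive_form (form_add (regular_part sc ip x) (regular_part sc ip y))"
    "fdom (regular_part sc ip (form_add x y)) = fdom (form_add (regular_part sc ip x) (regular_part sc ip y))"
    using regular_part_Vf(3)[OF xy] unfolding reg_candidate_def by auto
  fix z assume "z \<in> fdom (regular_part sc ip (form_add x y))"
  hence z: "z \<in> fdom x" "z \<in> fdom y" using regular_part_Vf(3)[OF xy] by auto
  show "Re (fval (regular_part sc ip (form_add x y)) z z)
      = Re (fval (form_add (regular_part sc ip x) (regular_part sc ip y)) z z)"
    using le[OF z] regular_part_superadditive[OF x y od z] z regular_part_Vf(3)[OF x] regular_part_Vf(3)[OF y]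
    by (auto simp: fval_form_add)
qed

lemma obar_oplus_assoc1:
  assumes x: "x \<in> Vf sc ip" and y: "y \<in> Vf sc ip" and u: "u \<in> Vf sc ip"
    and xy: "obar_oplus sc ip x y = Some xy" and xy_u: "obar_oplus sc ip xy u \<noteq> None"
  shows "\<exists>yu. obar_oplus sc ip y u = Some yu \<and> obar_oplus sc ip x yu = obar_oplus sc ip xy u"
proof -
  let ?R = "regular_part sc ip"
  have oxy: "oplus_defined ip x y" and rxy: "?R (form_add x y) = form_add (?R x) (?R y)"
    and xy_eq: "xy = form_add x y" using xy unfolding obar_oplus_eq_Some by auto
  obtain w where w: "obar_oplus sc ip xy u = Some w" using xy_u by blast
  have oxy_u: "oplus_defined ip (form_add x y) u"
    and rxy_u: "?R (form_add (form_add x y) u) = form_add (?R (form_add x y)) (?R u)"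
    and w_eq: "w = form_add (form_add x y) u" using w unfolding obar_oplus_eq_Some xy_eq by auto
  have R_assoc: "?R (form_add x (form_add y u)) = form_add (form_add (?R x) (?R y)) (?R u)"
    using rxy_u rxy form_add_assoc by metis
  have "oplus_defined ip y u \<and> oplus_defined ip x (form_add y u) \<and> ?R (form_add y u) = form_add (?R y) (?R u)"
  proof (cases "bounded_form ip y \<and> bounded_form ip u")
    case True
    have oyu: "oplus_defined ip y u" using True unfolding oplus_defined_def by simp
    have byu: "bounded_form ip (form_add y u)" using bounded_form_add True by blast
    have "?R (form_add y u) = form_add y u" by (rule regular_part_bounded[OF form_add_Vf[OF y u oyu] byu])
    moreover have "?R y = y" "?R u = u" using regular_part_bounded y u True by auto
    ultimately show ?thesis using oyu byu unfolding oplus_defined_def by simp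
  next
    case False
    have incl: "fdom y \<inter> fdom u \<subseteq> fdom x" and oyu: "oplus_defined ip y u"
      and oxyu: "oplus_defined ip x (form_add y u)" using oplus_defined_assoc[OF x y u oxy oxy_u False] by auto
    have yu: "form_add y u \<in> Vf sc ip" by (rule form_add_Vf[OF y u oyu])
    have "?R (form_add y u) = form_add (?R y) (?R u)"
    proof (rule regular_part_form_add_eqI[OF y u oyu])
      fix z assume z: "z \<in> fdom y" "z \<in> fdom u"
      hence "Re (fval (?R x) z z) + Re (fval (?R (form_add y u)) z z) \<le> Re (fval (?R (form_add x (form_add y u))) z z)"
        using regular_part_superadditive[OF x yu oxyu] incl by auto
      thus "Re (fval (?R (form_add y u)) z z) \<le> Re (fval (?R y) z z) + Re (fval (?R u) z z)"
        unfolding R_assoc using z incl regular_part_Vf(3)[OF x] regular_part_Vf(3)[OF y] regular_part_Vf(3)[OF u]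
        by (auto simp: fval_form_add)
    qed
    thus ?thesis using oyu oxyu by blast
  qed
  hence oyu: "oplus_defined ip y u" and oxyu: "oplus_defined ip x (form_add y u)"
    and ryu: "?R (form_add y u) = form_add (?R y) (?R u)" by auto
  have "obar_oplus sc ip y u = Some (form_add y u)" unfolding obar_oplus_eq_Some using oyu ryu by simp
  moreover have "?R (form_add x (form_add y u)) = form_add (?R x) (?R (form_add y u))"
    using R_assoc ryu form_add_assoc by metis
  hence "obar_oplus sc ip x (form_add y u) = Some (form_add x (form_add y u))"
    unfolding obar_oplus_eq_Some using oxyu by simp
  moreover have "form_add x (form_add y u) = w" using w_eq form_add_assoc by metis
  ultimately show ?thesis using w by auto
qed

lemma obar_oplus_assoc2:
  assumes x: "x \<in> Vf sc ip" and y: "y \<in> Vf sc ip" and u: "u \<in> Vf sc ip"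
    and e1: "obar_oplus sc ip y u = Some yu" and e2: "obar_oplus sc ip x yu \<noteq> None"
  shows "\<exists>xy. obar_oplus sc ip x y = Some xy \<and> obar_oplus sc ip xy u = obar_oplus sc ip x yu"
proof -
  have e1': "obar_oplus sc ip u y = Some yu" using e1 obar_oplus_commute by metis
  have e2': "obar_oplus sc ip yu x \<noteq> None" using e2 obar_oplus_commute by metis
  obtain yx where yx: "obar_oplus sc ip y x = Some yx" "obar_oplus sc ip u yx = obar_oplus sc ip yu x"
    using obar_oplus_assoc1[OF u y x e1' e2'] by blast
  show ?thesis
    using yx obar_oplus_commute by metis
qed

lemma Vf_gen_effect_algebra: "gen_effect_algebra (Vf sc ip) (obar_oplus sc ip) zero_form"
  unfolding gen_effect_algebra_def
proof (intro conjI ballI allI impI)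
  show "zero_form \<in> Vf sc ip" by (rule zero_form_Vf)
  show "\<And>x y w. x \<in> Vf sc ip \<Longrightarrow> y \<in> Vf sc ip \<Longrightarrow> obar_oplus sc ip x y = Some w \<Longrightarrow> w \<in> Vf sc ip"
    by (rule obar_oplus_Vf)
  show "\<And>x y. obar_oplus sc ip x y = obar_oplus sc ip y x" by (rule obar_oplus_commute)
  show "\<exists>yu. obar_oplus sc ip y u = Some yu \<and> obar_oplus sc ip x yu = obar_oplus sc ip xy u"
    if "x \<in> Vf sc ip" "y \<in> Vf sc ip" "u \<in> Vf sc ip"
      "obar_oplus sc ip x y = Some xy \<and> obar_oplus sc ip xy u \<noteq> None" for x y u xy
    using obar_oplus_assoc1[OF that(1-3)] that(4) by blast
  show "\<exists>xy. obar_oplus sc ip x y = Some xy \<and> obar_oplus sc ip xy u = obar_oplus sc ip x yu"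
    if "x \<in> Vf sc ip" "y \<in> Vf sc ip" "u \<in> Vf sc ip"
      "obar_oplus sc ip y u = Some yu \<and> obar_oplus sc ip x yu \<noteq> None" for x y u yu
    using obar_oplus_assoc2[OF that(1-3)] that(4) by blast
  show "obar_oplus sc ip x zero_form = Some x" if "x \<in> Vf sc ip" for x by (rule obar_oplus_zero[OF that])
  show "y = u" if "x \<in> Vf sc ip" "y \<in> Vf sc ip" "u \<in> Vf sc ip"
      "obar_oplus sc ip x y \<noteq> None \<and> obar_oplus sc ip x y = obar_oplus sc ip x u" for x y u
    using obar_oplus_cancel[OF that(1-3)] that(4) by blast
  show "x = zero_form" "y = zero_form"
    if "x \<in> Vf sc ip" "y \<in> Vf sc ip" "obar_oplus sc ip x y = Some zero_form" for x y
    using obar_oplus_eq_zero[OF that] by blast+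
qed

end

lemma infinite_dimensional_nontrivial:
  fixes sc :: "complex \<Rightarrow> 'a::ab_group_add \<Rightarrow> 'a"
  assumes "infinite_dimensional sc" shows "\<exists>v::'a. v \<noteq> 0"
proof -
  have "cspan sc {} = {0}" unfolding cspan_def by simp
  thus ?thesis using assms unfolding infinite_dimensional_def by auto
qed

theorem theorem4p19:
  fixes sc :: "complex \<Rightarrow> 'a::ab_group_add \<Rightarrow> 'a"
    and ip :: "'a \<Rightarrow> 'a \<Rightarrow> complex"
  assumes "complex_hilbert_space sc ip"
    and "infinite_dimensional sc"
  shows "gen_effect_algebra (Vf sc ip) (obar_oplus sc ip) zero_form"
proof -
  interpret nontrivial_hilbert_space sc ip
    using assms infinite_dimensional_nontrivial
    by (simp add: nontrivial_hilbert_space_def nontrivial_hilbert_space_axioms_def hilbert_space_def)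
  show ?thesis by (rule Vf_gen_effect_algebra)
qed

end
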